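(* Let $F$ be a field, $R$ a Hopf $F$-algebra, and let $T=R[x;\sigma,\delta]$ be a Hopf $F$-algebra containing $R$ as a Hopf subalgebra, where $\sigma$ is an $F$-algebra automorphism of $R$ and $\delta$ a $\sigma$-derivation of $R$. Suppose that $R\otimes R$ is a domain. Then $$\Delta(x)=s(1\otimes x)+t(x\otimes 1)+v(x\otimes x)+w$$ for some $s,t,v,w\in R\otimes R$.
   Context: Hopf algebras have bijective antipode. $R[x;\sigma,\delta]$ is the skew polynomial algebra generated by $R$ and $x$ with $xr-\sigma(r)x=\delta(r)$ for $r\in R$, where $\delta(ab)=\delta(a)b+\sigma(a)\delta(b)$. *)

theory Defs
  imports Complex_Main
begin

definition falgebra :: "('f::field \<Rightarrow> 'a::ring_1 \<Rightarrow> 'a) \<Rightarrow> bool" where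
  "falgebra sc \<longleftrightarrow> Vector_Spaces.vector_space sc \<and>
     (\<forall>c a b. sc c (a * b) = sc c a * b \<and> sc c (a * b) = a * sc c b)"

text \<open>Tensor product V \<otimes> W realised as a vector space U with a bilinear map tens,
  characterised (up to unique isomorphism) by: pure tensors span U, and for linearly
  independent sets A of V and B of W the family (a \<otimes> b) indexed by A \<times> B is linearly
  independent (so bases go to bases).\<close>

definition is_tensor ::
  "('f::field \<Rightarrow> 'v::ab_group_add \<Rightarrow> 'v) \<Rightarrow> ('f \<Rightarrow> 'w::ab_group_add \<Rightarrow> 'w) \<Rightarrow>
   ('f \<Rightarrow> 'u::ab_group_add \<Rightarrow> 'u) \<Rightarrow> ('v \<Rightarrow> 'w \<Rightarrow> 'u) \<Rightarrow> bool" where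
  "is_tensor scV scW scU tens \<longleftrightarrow>
     Vector_Spaces.vector_space scV \<and> Vector_Spaces.vector_space scW \<and> Vector_Spaces.vector_space scU \<and>
     (\<forall>w. Vector_Spaces.linear scV scU (\<lambda>v. tens v w)) \<and>
     (\<forall>v. Vector_Spaces.linear scW scU (tens v)) \<and>
     module.span scU (case_prod tens ` UNIV) = UNIV \<and>
     (\<forall>A B. \<not> module.dependent scV A \<and> \<not> module.dependent scW B \<longrightarrow>
        \<not> module.dependent scU (case_prod tens ` (A \<times> B)) \<and> inj_on (case_prod tens) (A \<times> B))"

definition tsum :: "('v \<Rightarrow> 'w \<Rightarrow> 'u::monoid_add) \<Rightarrow> ('v \<times> 'w) list \<Rightarrow> 'u" where
  "tsum tens ps = sum_list (map (case_prod tens) ps)"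

text \<open>Hopf algebra (with bijective antipode, as a standing convention) on the F-algebra
  T with scalar multiplication sc.  TT = T \<otimes> T (algebra, via tens), TTT = (T \<otimes> T) \<otimes> T
  (via tens3).  Maps out of tensor products (\<epsilon> \<otimes> id, S \<otimes> id, multiplication,
  \<Delta> \<otimes> id, id \<otimes> \<Delta>) are evaluated on arbitrary representations as sums of pure tensors;
  these are well defined by the tensor product property.\<close>

definition hopf_algebra ::
  "('f::field \<Rightarrow> 't::ring_1 \<Rightarrow> 't) \<Rightarrow> ('f \<Rightarrow> 'u::ring_1 \<Rightarrow> 'u) \<Rightarrow> ('t \<Rightarrow> 't \<Rightarrow> 'u) \<Rightarrow>
   ('f \<Rightarrow> 'w::ab_group_add \<Rightarrow> 'w) \<Rightarrow> ('u \<Rightarrow> 't \<Rightarrow> 'w) \<Rightarrow>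
   ('t \<Rightarrow> 'u) \<Rightarrow> ('t \<Rightarrow> 'f) \<Rightarrow> ('t \<Rightarrow> 't) \<Rightarrow> bool" where
  "hopf_algebra sc scU tens scW tens3 \<Delta> \<epsilon> S \<longleftrightarrow>
     falgebra sc \<and> falgebra scU \<and>
     is_tensor sc sc scU tens \<and>
     (\<forall>a b c d. tens a b * tens c d = tens (a * c) (b * d)) \<and> tens 1 1 = 1 \<and>
     is_tensor scU sc scW tens3 \<and>
     Vector_Spaces.linear sc scU \<Delta> \<and> (\<forall>a b. \<Delta> (a * b) = \<Delta> a * \<Delta> b) \<and> \<Delta> 1 = 1 \<and>
     Vector_Spaces.linear sc ((*) :: 'f \<Rightarrow> 'f \<Rightarrow> 'f) \<epsilon> \<and>
       (\<forall>a b. \<epsilon> (a * b) = \<epsilon> a * \<epsilon> b) \<and> \<epsilon> 1 = 1 \<and>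
     Vector_Spaces.linear sc sc S \<and> bij S \<and>
     (\<forall>a ps. \<Delta> a = tsum tens ps \<longrightarrow>
        (\<Sum>(b, c)\<leftarrow>ps. sc (\<epsilon> b) c) = a \<and> (\<Sum>(b, c)\<leftarrow>ps. sc (\<epsilon> c) b) = a) \<and>
     (\<forall>a ps. \<Delta> a = tsum tens ps \<longrightarrow>
        (\<Sum>(b, c)\<leftarrow>ps. S b * c) = sc (\<epsilon> a) 1 \<and> (\<Sum>(b, c)\<leftarrow>ps. b * S c) = sc (\<epsilon> a) 1) \<and>
     (\<forall>a ps qs. \<Delta> a = tsum tens ps \<and> length qs = length ps \<and>
        (\<forall>i<length ps. \<Delta> (snd (ps ! i)) = tsum tens (qs ! i)) \<longrightarrow>
        (\<Sum>i<length ps. tens3 (\<Delta> (fst (ps ! i))) (snd (ps ! i))) =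
        (\<Sum>i<length ps. \<Sum>(d, e)\<leftarrow>qs ! i. tens3 (tens (fst (ps ! i)) d) e))"

text \<open>R \<otimes> R, identified with its (injective, as F is a field) image in T \<otimes> T.\<close>
definition tensor_sub :: "('f::field \<Rightarrow> 'u::ab_group_add \<Rightarrow> 'u) \<Rightarrow> ('t \<Rightarrow> 't \<Rightarrow> 'u) \<Rightarrow> 't set \<Rightarrow> 'u set" where
  "tensor_sub scU tens R = module.span scU (case_prod tens ` (R \<times> R))"

definition hopf_subalgebra ::
  "('f::field \<Rightarrow> 't::ring_1 \<Rightarrow> 't) \<Rightarrow> ('f \<Rightarrow> 'u::ring_1 \<Rightarrow> 'u) \<Rightarrow> ('t \<Rightarrow> 't \<Rightarrow> 'u) \<Rightarrow>
   ('t \<Rightarrow> 'u) \<Rightarrow> ('t \<Rightarrow> 't) \<Rightarrow> 't set \<Rightarrow> bool" where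
  "hopf_subalgebra sc scU tens \<Delta> S R \<longleftrightarrow>
     module.subspace sc R \<and> 1 \<in> R \<and> (\<forall>a\<in>R. \<forall>b\<in>R. a * b \<in> R) \<and>
     \<Delta> ` R \<subseteq> tensor_sub scU tens R \<and> bij_betw S R R"

definition falg_automorphism :: "('f::field \<Rightarrow> 't::ring_1 \<Rightarrow> 't) \<Rightarrow> 't set \<Rightarrow> ('t \<Rightarrow> 't) \<Rightarrow> bool" where
  "falg_automorphism sc R \<sigma> \<longleftrightarrow> bij_betw \<sigma> R R \<and> \<sigma> 1 = 1 \<and>
     (\<forall>a\<in>R. \<forall>b\<in>R. \<sigma> (a + b) = \<sigma> a + \<sigma> b \<and> \<sigma> (a * b) = \<sigma> a * \<sigma> b) \<and>
     (\<forall>c. \<forall>a\<in>R. \<sigma> (sc c a) = sc c (\<sigma> a))"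

definition sigma_derivation :: "('f::field \<Rightarrow> 't::ring_1 \<Rightarrow> 't) \<Rightarrow> 't set \<Rightarrow> ('t \<Rightarrow> 't) \<Rightarrow> ('t \<Rightarrow> 't) \<Rightarrow> bool" where
  "sigma_derivation sc R \<sigma> \<delta> \<longleftrightarrow> \<delta> ` R \<subseteq> R \<and>
     (\<forall>a\<in>R. \<forall>b\<in>R. \<delta> (a + b) = \<delta> a + \<delta> b \<and> \<delta> (a * b) = \<delta> a * b + \<sigma> a * \<delta> b) \<and>
     (\<forall>c. \<forall>a\<in>R. \<delta> (sc c a) = sc c (\<delta> a))"

text \<open>The ring T (all of the type) is the skew polynomial ring R[x;\<sigma>,\<delta>]: T is a free left
  R-module with basis the powers of x, and x r - \<sigma>(r) x = \<delta>(r) for r in R.\<close>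
definition is_skew_poly_ring :: "'t::ring_1 set \<Rightarrow> ('t \<Rightarrow> 't) \<Rightarrow> ('t \<Rightarrow> 't) \<Rightarrow> 't \<Rightarrow> bool" where
  "is_skew_poly_ring R \<sigma> \<delta> x \<longleftrightarrow>
     (\<forall>r\<in>R. x * r - \<sigma> r * x = \<delta> r) \<and>
     (\<forall>t. \<exists>n c. (\<forall>i<n. c i \<in> R) \<and> t = (\<Sum>i<n. c i * x ^ i)) \<and>
     (\<forall>n c. (\<forall>i<n. c i \<in> R) \<and> (\<Sum>i<n. c i * x ^ i) = 0 \<longrightarrow> (\<forall>i<n. c i = 0))"

definition is_domain_sub :: "'u::ring_1 set \<Rightarrow> bool" where
  "is_domain_sub D \<longleftrightarrow> (1::'u) \<noteq> 0 \<and> (\<forall>u\<in>D. \<forall>v\<in>D. u * v = 0 \<longrightarrow> u = 0 \<or> v = 0)"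

end

theory Submission
  imports Defs "HOL-Library.Product_Plus" "HOL-Library.Product_Order"
begin

text \<open>Every element u of T \<otimes> T has a unique expansion u = \<Sum> \<kappa>(i,j)(u) (x^i \<otimes> x^j) with
  coefficients \<kappa>(i,j)(u) in R \<otimes> R.  For a lexicographic order on the exponents (i, j), the
  leading coefficient of a product u v is \<kappa>(m)(u) \<tau>(m)(\<kappa>(n)(v)), where m, n are the leading
  exponents and \<tau>(i,j) = \<sigma>^i \<otimes> \<sigma>^j is injective; as R \<otimes> R is a domain, the leading exponent
  of \<Delta>(x)^k is k times that of \<Delta>(x).  Suppose the leading exponent of \<Delta>(x) has a coordinate
  d \<ge> 2, say the second.  Applying a suitable functional f \<otimes> id to \<Delta>(x) gives y \<in> T of degree d,
  and coassociativity shows that \<Delta>(y) has degree at most d in the second factor.  But writing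
  y = \<Sum> c_i x^i, the leading exponent of \<Delta>(y) = \<Sum> \<Delta>(c_i) \<Delta>(x)^i has second coordinate
  d^2 > d.  So all exponents occurring in \<Delta>(x) are at most 1.\<close>

lemma linear_map_add: "Vector_Spaces.linear s1 s2 f \<Longrightarrow> f (a + b) = f a + f b"
  by (simp add: Vector_Spaces.linear_iff)

lemma linear_map_scale: "Vector_Spaces.linear s1 s2 f \<Longrightarrow> f (s1 c a) = s2 c (f a)"
  by (simp add: Vector_Spaces.linear_iff)

lemma linear_map_zero: "Vector_Spaces.linear s1 s2 f \<Longrightarrow> f 0 = 0"
  using linear_map_add[of s1 s2 f 0 0] by simp

lemma linear_map_sum:
  assumes "Vector_Spaces.linear s1 s2 f"
  shows "f (\<Sum>i\<in>I. g i) = (\<Sum>i\<in>I. f (g i))"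
  by (induction I rule: infinite_finite_induct)
     (auto simp: linear_map_add[OF assms] linear_map_zero[OF assms])

lemma linear_map_sum_list:
  assumes "Vector_Spaces.linear s1 s2 f"
  shows "f (sum_list (map g l)) = sum_list (map (\<lambda>z. f (g z)) l)"
  by (induction l) (auto simp: linear_map_add[OF assms] linear_map_zero[OF assms])

lemma linear_map_comp:
  "Vector_Spaces.linear s1 s2 f \<Longrightarrow> Vector_Spaces.linear s2 s3 g \<Longrightarrow>
   Vector_Spaces.linear s1 s3 (\<lambda>a. g (f a))"
  using Vector_Spaces.linear_compose[of s1 s2 f s3 g] by (simp add: comp_def)

lemma vector_space_field_mult: "Vector_Spaces.vector_space ((*) :: 'f::field \<Rightarrow> 'f \<Rightarrow> 'f)"
  by unfold_locales (auto simp: algebra_simps)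

lemma vector_space_pairI:
  "Vector_Spaces.vector_space s1 \<Longrightarrow> Vector_Spaces.vector_space s2 \<Longrightarrow> vector_space_pair s1 s2"
  by (simp add: vector_space_pair_def)

lemma vector_space_basis_UNIV:
  assumes "Vector_Spaces.vector_space s"
  obtains B where "\<not> module.dependent s B" "module.span s B = UNIV"
proof -
  interpret vector_space s by fact
  obtain B where "independent B" "UNIV \<subseteq> span B" using basis_exists[of UNIV] by metis
  then show ?thesis using that by auto
qed

lemma linear_eq_on_span2:
  assumes V: "Vector_Spaces.vector_space s"
    and F1: "\<And>b. b \<in> module.span s B \<Longrightarrow> Vector_Spaces.linear s s (\<lambda>a. F a b)"
    and F2: "\<And>a. a \<in> B \<Longrightarrow> Vector_Spaces.linear s s (F a)"
    and G1: "\<And>b. b \<in> module.span s B \<Longrightarrow> Vector_Spaces.linear s s (\<lambda>a. G a b)"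
    and G2: "\<And>a. a \<in> B \<Longrightarrow> Vector_Spaces.linear s s (G a)"
    and eq: "\<And>a b. a \<in> B \<Longrightarrow> b \<in> B \<Longrightarrow> F a b = G a b"
    and a: "a \<in> module.span s B" and b: "b \<in> module.span s B"
  shows "F a b = G a b"
proof -
  interpret p: vector_space_pair s s using vector_space_pairI[OF V V] .
  have "F a' b = G a' b" if "a' \<in> B" for a'
    using p.linear_eq_on[OF F2[OF that] G2[OF that] b] eq that by blast
  then show ?thesis using p.linear_eq_on[OF F1[OF b] G1[OF b] a] by blast
qed

subsection \<open>Tensor products\<close>

lemma is_tensor_vector_spaces:
  assumes "is_tensor scV scW scU tens"
  shows "Vector_Spaces.vector_space scV" "Vector_Spaces.vector_space scW"
    "Vector_Spaces.vector_space scU"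
  using assms unfolding is_tensor_def by blast+

lemma is_tensor_linear_left: "is_tensor scV scW scU tens \<Longrightarrow> Vector_Spaces.linear scV scU (\<lambda>v. tens v w)"
  unfolding is_tensor_def by blast

lemma is_tensor_linear_right: "is_tensor scV scW scU tens \<Longrightarrow> Vector_Spaces.linear scW scU (tens v)"
  unfolding is_tensor_def by blast

lemma is_tensor_span: "is_tensor scV scW scU tens \<Longrightarrow> module.span scU (case_prod tens ` UNIV) = UNIV"
  unfolding is_tensor_def by blast

lemma is_tensor_lift:
  fixes tens :: "'v::ab_group_add \<Rightarrow> 'w::ab_group_add \<Rightarrow> 'u::ab_group_add"
    and \<phi> :: "'v \<Rightarrow> 'w \<Rightarrow> 'x::ab_group_add"
  assumes T: "is_tensor scV scW scU tens" and X: "Vector_Spaces.vector_space scX"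
    and l1: "\<And>w. Vector_Spaces.linear scV scX (\<lambda>v. \<phi> v w)"
    and l2: "\<And>v. Vector_Spaces.linear scW scX (\<phi> v)"
  shows "\<exists>L. Vector_Spaces.linear scU scX L \<and> (\<forall>v w. L (tens v w) = \<phi> v w)"
proof -
  note VWU = is_tensor_vector_spaces[OF T]
  obtain BV where BV: "\<not> module.dependent scV BV" "module.span scV BV = UNIV"
    using vector_space_basis_UNIV[OF VWU(1)] by metis
  obtain BW where BW: "\<not> module.dependent scW BW" "module.span scW BW = UNIV"
    using vector_space_basis_UNIV[OF VWU(2)] by metis
  have I: "\<not> module.dependent scU (case_prod tens ` (BV \<times> BW))" "inj_on (case_prod tens) (BV \<times> BW)"
    using T BV(1) BW(1) unfolding is_tensor_def by blast+
  interpret p: vector_space_pair scU scX using vector_space_pairI[OF VWU(3) X] .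
  interpret pv: vector_space_pair scV scX using vector_space_pairI[OF VWU(1) X] .
  interpret pw: vector_space_pair scW scX using vector_space_pairI[OF VWU(2) X] .
  obtain g where g: "Vector_Spaces.linear scU scX g"
    "\<forall>z\<in>case_prod tens ` (BV \<times> BW). g z = case_prod \<phi> (the_inv_into (BV \<times> BW) (case_prod tens) z)"
    using p.linear_independent_extend[OF I(1),
        of "\<lambda>z. case_prod \<phi> (the_inv_into (BV \<times> BW) (case_prod tens) z)"] by blast
  have on_basis: "g (tens b c) = \<phi> b c" if "b \<in> BV" "c \<in> BW" for b c
    using g(2) that the_inv_into_f_f[OF I(2), of "(b, c)"] by auto
  have on_left_basis: "g (tens v c) = \<phi> v c" if "c \<in> BW" for v c
    using pv.linear_eq_on[of "\<lambda>v. g (tens v c)" "\<lambda>v. \<phi> v c" v BV] BV(2) on_basis[OF _ that]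
      linear_map_comp[OF is_tensor_linear_left[OF T] g(1)] l1 by auto
  have "g (tens v w) = \<phi> v w" for v w
    using pw.linear_eq_on[of "\<lambda>w. g (tens v w)" "\<phi> v" w BW] BW(2) on_left_basis
      linear_map_comp[OF is_tensor_linear_right[OF T] g(1)] l2 by auto
  then show ?thesis using g(1) by blast
qed

lemma is_tensor_linear_eq:
  assumes T: "is_tensor scV scW scU tens" and X: "Vector_Spaces.vector_space scX"
    and "Vector_Spaces.linear scU scX f" "Vector_Spaces.linear scU scX g"
    and "\<And>v w. f (tens v w) = g (tens v w)"
  shows "f u = g u"
proof -
  interpret p: vector_space_pair scU scX
    using vector_space_pairI[OF is_tensor_vector_spaces(3)[OF T] X] .
  have "\<And>b. b \<in> case_prod tens ` UNIV \<Longrightarrow> f b = g b" using assms(5) by auto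
  then show ?thesis
    using p.linear_eq_on[of f g u "case_prod tens ` UNIV"] assms(3,4) is_tensor_span[OF T] by blast
qed

lemma is_tensor_swap:
  assumes "is_tensor scV scW scU tens"
  shows "is_tensor scW scV scU (\<lambda>w v. tens v w)"
proof -
  have im: "case_prod (\<lambda>w v. tens v w) ` (B \<times> A) = case_prod tens ` (A \<times> B)" for A B
    by force
  have inj: "inj_on (case_prod (\<lambda>w v. tens v w)) (B \<times> A)" if "inj_on (case_prod tens) (A \<times> B)" for A B
    using that unfolding inj_on_def by auto
  have "range (case_prod (\<lambda>w v. tens v w)) = range (case_prod tens)"
    using im[of UNIV UNIV] by simp
  then show ?thesis using assms im inj unfolding is_tensor_def by metis
qed

lemma is_tensor_basis_expansion:
  assumes T: "is_tensor scV scW scU tens" and B: "module.span scV B = UNIV"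
  shows "\<exists>Bs g. finite Bs \<and> Bs \<subseteq> B \<and> z = (\<Sum>b\<in>Bs. tens b (g b))"
proof -
  note VWU = is_tensor_vector_spaces[OF T]
  interpret V: vector_space scV by (rule VWU(1))
  interpret U: vector_space scU by (rule VWU(3))
  note left = is_tensor_linear_left[OF T] and right = is_tensor_linear_right[OF T]
  have "z \<in> module.span scU (case_prod tens ` UNIV)" using is_tensor_span[OF T] by simp
  then show ?thesis
  proof (induction rule: U.span_induct_alt)
    case base
    then show ?case by (intro exI[of _ "{}"]) auto
  next
    case (step c z y)
    then obtain v w where z: "z = tens v w" by auto
    obtain Bs g where y: "finite Bs" "Bs \<subseteq> B" "y = (\<Sum>b\<in>Bs. tens b (g b))" using step by blast
    obtain t r where t: "finite t" "t \<subseteq> B" "v = (\<Sum>a\<in>t. scV (r a) a)"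
      using B unfolding V.span_explicit by blast
    let ?g' = "\<lambda>b. (if b \<in> t then scW (c * r b) w else 0) + (if b \<in> Bs then g b else 0)"
    have "scU c z = (\<Sum>b\<in>t. tens b (scW (c * r b) w))"
      unfolding z t(3) linear_map_sum[OF left]
      by (simp add: linear_map_scale[OF left] linear_map_scale[OF right] U.scale_sum_right)
    also have "\<dots> = (\<Sum>b\<in>t \<union> Bs. tens b (if b \<in> t then scW (c * r b) w else 0))"
      using t y by (intro sum.mono_neutral_cong_left) (auto simp: linear_map_zero[OF right])
    finally have cz: "scU c z = \<dots>" .
    have "y = (\<Sum>b\<in>t \<union> Bs. tens b (if b \<in> Bs then g b else 0))"
      unfolding y(3) using t y by (intro sum.mono_neutral_cong_left) (auto simp: linear_map_zero[OF right])
    then have "scU c z + y = (\<Sum>b\<in>t \<union> Bs. tens b (?g' b))"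
      unfolding cz by (simp add: linear_map_add[OF right] sum.distrib)
    then show ?case using t y by (intro exI[of _ "t \<union> Bs"] exI[of _ ?g']) auto
  qed
qed

lemma is_tensor_slice_nonzero:
  fixes tens :: "'v::ab_group_add \<Rightarrow> 'w::ab_group_add \<Rightarrow> 'u::ab_group_add"
    and scV :: "'f::field \<Rightarrow> 'v \<Rightarrow> 'v"
  assumes T: "is_tensor scV scW scU tens" and u: "u \<noteq> 0"
  shows "\<exists>f L. Vector_Spaces.linear scV (*) f \<and> Vector_Spaces.linear scU scW L \<and>
           (\<forall>v w. L (tens v w) = scW (f v) w) \<and> L u \<noteq> 0"
proof -
  note VWU = is_tensor_vector_spaces[OF T]
  interpret V: vector_space scV by (rule VWU(1))
  interpret W: vector_space scW by (rule VWU(2))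
  obtain B where B: "\<not> module.dependent scV B" "module.span scV B = UNIV"
    using vector_space_basis_UNIV[OF VWU(1)] by metis
  obtain Bs g where Bs: "finite Bs" "Bs \<subseteq> B" "u = (\<Sum>b\<in>Bs. tens b (g b))"
    using is_tensor_basis_expansion[OF T B(2)] by blast
  obtain b0 where b0: "b0 \<in> Bs" "g b0 \<noteq> 0"
    using u Bs(3) linear_map_zero[OF is_tensor_linear_right[OF T]] by (metis (mono_tags, lifting) sum.neutral)
  interpret p: vector_space_pair scV "(*)" using vector_space_pairI[OF VWU(1) vector_space_field_mult] .
  obtain f where f: "Vector_Spaces.linear scV (*) f" "\<forall>b\<in>B. f b = (if b = b0 then 1 else 0)"
    using p.linear_independent_extend[OF B(1), of "\<lambda>b. if b = b0 then 1 else 0"] by blast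
  have "\<exists>L. Vector_Spaces.linear scU scW L \<and> (\<forall>v w. L (tens v w) = scW (f v) w)"
  proof (rule is_tensor_lift[OF T VWU(2)])
    show "Vector_Spaces.linear scV scW (\<lambda>v. scW (f v) w)" for w
      using f(1) by (simp add: Vector_Spaces.linear_iff W.scale_left_distrib VWU)
    show "Vector_Spaces.linear scW scW (\<lambda>w. scW (f v) w)" for v
      by (simp add: Vector_Spaces.linear_iff W.scale_right_distrib VWU)
  qed
  then obtain L where L: "Vector_Spaces.linear scU scW L" "\<forall>v w. L (tens v w) = scW (f v) w" by blast
  have "L u = (\<Sum>b\<in>Bs. L (tens b (g b)))" unfolding Bs(3) by (rule linear_map_sum[OF L(1)])
  also have "\<dots> = (\<Sum>b\<in>Bs. if b = b0 then g b else 0)"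
    using Bs(2) f(2) L(2) by (intro sum.cong) auto
  also have "\<dots> = g b0" using Bs(1) b0(1) by (simp add: sum.delta)
  finally show ?thesis using b0(2) f(1) L by metis
qed

lemma tsum_Nil [simp]: "tsum t [] = 0"
  by (simp add: tsum_def)

lemma tsum_Cons [simp]: "tsum t (p # l) = t (fst p) (snd p) + tsum t l"
  by (simp add: tsum_def case_prod_beta)

lemma tsum_append: "tsum t (l1 @ l2) = tsum t l1 + tsum t l2"
  by (simp add: tsum_def)

lemma tsum_conv_sum_nth: "tsum t ps = (\<Sum>i<length ps. t (fst (ps ! i)) (snd (ps ! i)))"
  unfolding tsum_def by (simp add: sum_list_sum_nth atLeast0LessThan case_prod_beta)

lemma sum_tsum_exists:
  fixes t :: "'v \<Rightarrow> 'w \<Rightarrow> 'u::comm_monoid_add"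
  assumes "finite X" "\<forall>p\<in>X. \<exists>l. set l \<subseteq> Q \<and> f p = tsum t l"
  shows "\<exists>l. set l \<subseteq> Q \<and> sum f X = tsum t l"
  using assms
proof (induction X rule: finite_induct)
  case empty
  then show ?case by (intro exI[of _ "[]"]) simp
next
  case (insert p X)
  obtain l1 l2 where "set l1 \<subseteq> Q" "f p = tsum t l1" "set l2 \<subseteq> Q" "sum f X = tsum t l2"
    using insert by blast
  then show ?case using insert by (intro exI[of _ "l1 @ l2"]) (simp add: tsum_append)
qed

text \<open>The flag b makes the second coordinate the primary key.\<close>

definition lex_less :: "bool \<Rightarrow> nat \<times> nat \<Rightarrow> nat \<times> nat \<Rightarrow> bool" where
  "lex_less b p q \<longleftrightarrow> (if b then snd p < snd q \<or> (snd p = snd q \<and> fst p < fst q)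
                            else fst p < fst q \<or> (fst p = fst q \<and> snd p < snd q))"

lemma lex_less_irrefl: "\<not> lex_less b p p"
  unfolding lex_less_def by auto

lemma lex_less_trans: "lex_less b p q \<Longrightarrow> lex_less b q r \<Longrightarrow> lex_less b p r"
  unfolding lex_less_def by (auto split: if_splits)

lemma lex_less_asym: "lex_less b p q \<Longrightarrow> \<not> lex_less b q p"
  unfolding lex_less_def by (auto split: if_splits)

lemma le_imp_eq_or_lex_less: "p \<le> q \<Longrightarrow> p = q \<or> lex_less b p q"
  unfolding lex_less_def by (cases p; cases q) auto

lemma lex_less_add_mono: "\<not> lex_less b m p \<Longrightarrow> \<not> lex_less b n q \<Longrightarrow> \<not> lex_less b (m + n) (p + q)"
  unfolding lex_less_def by (auto split: if_splits)

lemma lex_less_add_strict: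
  "\<not> lex_less b m p \<Longrightarrow> \<not> lex_less b n q \<Longrightarrow> p \<noteq> m \<or> q \<noteq> n \<Longrightarrow> lex_less b (p + q) (m + n)"
  unfolding lex_less_def by (cases p; cases q; cases m; cases n) (auto split: if_splits)

lemma lex_less_maximal_exists:
  "finite X \<Longrightarrow> X \<noteq> {} \<Longrightarrow> \<exists>m\<in>X. \<forall>s\<in>X. \<not> lex_less b m s"
proof (induction X rule: finite_ne_induct)
  case (singleton x)
  then show ?case using lex_less_irrefl by auto
next
  case (insert x F)
  then obtain m where m: "m \<in> F" "\<forall>s\<in>F. \<not> lex_less b m s" by blast
  then show ?case using lex_less_trans lex_less_irrefl by (cases "lex_less b m x") (metis insert_iff)+
qed

locale skew_hopf_extension =
  fixes sc :: "'f::field \<Rightarrow> 't::ring_1 \<Rightarrow> 't"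
    and scU :: "'f \<Rightarrow> 'u::ring_1 \<Rightarrow> 'u" and tens :: "'t \<Rightarrow> 't \<Rightarrow> 'u"
    and scW :: "'f \<Rightarrow> 'w::ab_group_add \<Rightarrow> 'w" and tens3 :: "'u \<Rightarrow> 't \<Rightarrow> 'w"
    and \<Delta> :: "'t \<Rightarrow> 'u" and \<epsilon> :: "'t \<Rightarrow> 'f" and S :: "'t \<Rightarrow> 't"
    and R :: "'t set" and \<sigma> \<delta> :: "'t \<Rightarrow> 't" and x :: 't
  assumes hopf: "hopf_algebra sc scU tens scW tens3 \<Delta> \<epsilon> S"
    and sub: "hopf_subalgebra sc scU tens \<Delta> S R"
    and sigma: "falg_automorphism sc R \<sigma>"
    and delta: "sigma_derivation sc R \<sigma> \<delta>"
    and skew: "is_skew_poly_ring R \<sigma> \<delta> x"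
    and domain: "is_domain_sub (tensor_sub scU tens R)"
begin

abbreviation RR :: "'u set" where "RR \<equiv> tensor_sub scU tens R"

lemma tensor_T: "is_tensor sc sc scU tens"
  and tensor_TTT: "is_tensor scU sc scW tens3"
  and falgebra_T: "falgebra sc"
  and falgebra_U: "falgebra scU"
  using hopf unfolding hopf_algebra_def by blast+

lemma vector_space_T: "Vector_Spaces.vector_space sc"
  and vector_space_U: "Vector_Spaces.vector_space scU"
  using is_tensor_vector_spaces[OF tensor_T] by blast+

interpretation T: vector_space sc by (rule vector_space_T)
interpretation U: vector_space scU by (rule vector_space_U)

lemma scale_mult_left: "sc c (a * b) = sc c a * b"
  and scaleU_mult_left: "scU c (u * v) = scU c u * v"
  and scaleU_mult_right: "scU c (u * v) = u * scU c v"
  using falgebra_T falgebra_U unfolding falgebra_def by blast+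

lemma tens_linear_left: "Vector_Spaces.linear sc scU (\<lambda>v. tens v w)"
  and tens_linear_right: "Vector_Spaces.linear sc scU (tens v)"
  using is_tensor_linear_left[OF tensor_T] is_tensor_linear_right[OF tensor_T] .

lemma tens_add_right: "tens c (a + b) = tens c a + tens c b"
  and tens_scale_left: "tens (sc k a) c = scU k (tens a c)"
  and tens_scale_right: "tens c (sc k a) = scU k (tens c a)"
  and tens_sum_left: "tens (\<Sum>i\<in>I. f i) c = (\<Sum>i\<in>I. tens (f i) c)"
  and tens_sum_right: "tens c (\<Sum>i\<in>I. f i) = (\<Sum>i\<in>I. tens c (f i))"
  using linear_map_add[OF tens_linear_right] linear_map_scale[OF tens_linear_left]
    linear_map_scale[OF tens_linear_right] linear_map_sum[OF tens_linear_left] linear_map_sum[OF tens_linear_right] by blast+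

lemma tens_zero_left [simp]: "tens 0 c = 0"
  and tens_zero_right [simp]: "tens c 0 = 0"
  using linear_map_zero[OF tens_linear_left] linear_map_zero[OF tens_linear_right] by blast+

lemma tens_mult: "tens a b * tens c d = tens (a * c) (b * d)"
  and tens_one: "tens 1 1 = 1"
  using hopf unfolding hopf_algebra_def by blast+

lemma comult_linear: "Vector_Spaces.linear sc scU \<Delta>"
  and comult_mult: "\<Delta> (a * b) = \<Delta> a * \<Delta> b"
  and comult_one: "\<Delta> 1 = 1"
  using hopf unfolding hopf_algebra_def by blast+

lemma comult_scale: "\<Delta> (sc k a) = scU k (\<Delta> a)"
  and comult_sum: "\<Delta> (\<Sum>i\<in>I. f i) = (\<Sum>i\<in>I. \<Delta> (f i))"
  using linear_map_scale[OF comult_linear] linear_map_sum[OF comult_linear] .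

lemma comult_power: "\<Delta> (a ^ n) = \<Delta> a ^ n"
  by (induction n) (auto simp: comult_one comult_mult)

lemma counit_left: "\<Delta> a = tsum tens ps \<Longrightarrow> (\<Sum>(b, c)\<leftarrow>ps. sc (\<epsilon> b) c) = a"
  using hopf unfolding hopf_algebra_def by blast

lemma coassoc:
  "\<Delta> a = tsum tens ps \<Longrightarrow> length qs = length ps \<Longrightarrow>
   (\<forall>i<length ps. \<Delta> (snd (ps ! i)) = tsum tens (qs ! i)) \<Longrightarrow>
   (\<Sum>i<length ps. tens3 (\<Delta> (fst (ps ! i))) (snd (ps ! i))) =
   (\<Sum>i<length ps. \<Sum>(d, e)\<leftarrow>qs ! i. tens3 (tens (fst (ps ! i)) d) e)"
  using hopf unfolding hopf_algebra_def by blast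

text \<open>The counit axiom, applied to the empty representation of \<Delta>(a) = 0.\<close>

lemma comult_eq_0D: "\<Delta> a = 0 \<Longrightarrow> a = 0"
  using counit_left[of a "[]"] by simp

lemma R_subspace: "module.subspace sc R"
  and R_one [simp]: "1 \<in> R"
  and R_mult: "a \<in> R \<Longrightarrow> b \<in> R \<Longrightarrow> a * b \<in> R"
  and comult_R: "a \<in> R \<Longrightarrow> \<Delta> a \<in> RR"
  using sub unfolding hopf_subalgebra_def by blast+

lemma R_zero [simp]: "0 \<in> R"
  and R_add: "a \<in> R \<Longrightarrow> b \<in> R \<Longrightarrow> a + b \<in> R"
  and R_scale: "a \<in> R \<Longrightarrow> sc k a \<in> R"
  and R_diff: "a \<in> R \<Longrightarrow> b \<in> R \<Longrightarrow> a - b \<in> R"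
  using R_subspace T.subspace_0 T.subspace_add T.subspace_scale T.subspace_diff by blast+

lemma sigma_bij: "bij_betw \<sigma> R R"
  and sigma_add: "a \<in> R \<Longrightarrow> b \<in> R \<Longrightarrow> \<sigma> (a + b) = \<sigma> a + \<sigma> b"
  and sigma_scale: "a \<in> R \<Longrightarrow> \<sigma> (sc k a) = sc k (\<sigma> a)"
  using sigma unfolding falg_automorphism_def by blast+

lemma sigma_R: "a \<in> R \<Longrightarrow> \<sigma> a \<in> R"
  using sigma_bij unfolding bij_betw_def by blast

lemma sigma_zero [simp]: "\<sigma> 0 = 0"
  using sigma_add[of 0 0] by simp

lemma delta_R: "a \<in> R \<Longrightarrow> \<delta> a \<in> R"
  and delta_add: "a \<in> R \<Longrightarrow> b \<in> R \<Longrightarrow> \<delta> (a + b) = \<delta> a + \<delta> b"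
  using delta unfolding sigma_derivation_def by blast+

lemma delta_zero [simp]: "\<delta> 0 = 0"
  using delta_add[of 0 0] by simp

lemma x_mult_R: "r \<in> R \<Longrightarrow> x * r = \<sigma> r * x + \<delta> r"
  using skew unfolding is_skew_poly_ring_def by (metis diff_add_cancel add.commute)

lemma skew_poly_exists: "\<exists>n c. (\<forall>i<n. c i \<in> R) \<and> t = (\<Sum>i<n. c i * x ^ i)"
  and skew_poly_eq_0D: "(\<forall>i<n. c i \<in> R) \<Longrightarrow> (\<Sum>i<n. c i * x ^ i) = 0 \<Longrightarrow> i < n \<Longrightarrow> c i = 0"
  using skew unfolding is_skew_poly_ring_def by blast+

lemma one_neq_zero_U: "(1::'u) \<noteq> 0"
  and RR_no_zero_divisors: "u \<in> RR \<Longrightarrow> v \<in> RR \<Longrightarrow> u \<noteq> 0 \<Longrightarrow> v \<noteq> 0 \<Longrightarrow> u * v \<noteq> 0"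
  using domain unfolding is_domain_sub_def by blast+

subsection \<open>Coefficients of skew polynomials\<close>

definition skew_rep :: "(nat \<Rightarrow> 't) \<Rightarrow> nat \<Rightarrow> 't \<Rightarrow> bool" where
  "skew_rep c n t \<longleftrightarrow> (\<forall>k. c k \<in> R) \<and> (\<forall>k\<ge>n. c k = 0) \<and> t = (\<Sum>k<n. c k * x ^ k)"

lemma skew_rep_mono: "skew_rep c n t \<Longrightarrow> n \<le> m \<Longrightarrow> skew_rep c m t"
proof -
  assume c: "skew_rep c n t" "n \<le> m"
  have "(\<Sum>k<n. c k * x ^ k) = (\<Sum>k<m. c k * x ^ k)"
    using c by (intro sum.mono_neutral_left) (auto simp: skew_rep_def)
  then show ?thesis using c unfolding skew_rep_def by auto
qed

lemma skew_rep_exists: "\<exists>c n. skew_rep c n t"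
proof -
  obtain n c where "\<forall>i<n. c i \<in> R" "t = (\<Sum>i<n. c i * x ^ i)"
    using skew_poly_exists by blast
  then show ?thesis unfolding skew_rep_def
    by (intro exI[of _ "\<lambda>k. if k < n then c k else 0"] exI[of _ n]) auto
qed

lemma skew_rep_unique: "skew_rep c n t \<Longrightarrow> skew_rep d m t \<Longrightarrow> c = d"
proof -
  assume "skew_rep c n t" "skew_rep d m t"
  then have c: "skew_rep c (max n m) t" and d: "skew_rep d (max n m) t"
    using skew_rep_mono by auto
  have "(\<Sum>k<max n m. (c k - d k) * x ^ k) = 0"
    using c d unfolding skew_rep_def by (simp add: algebra_simps sum_subtractf)
  then have "c k = d k" if "k < max n m" for k
    using skew_poly_eq_0D[of "max n m" "\<lambda>k. c k - d k"] that c d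
    unfolding skew_rep_def by (auto intro: R_diff)
  then show "c = d" using c d unfolding skew_rep_def by (metis not_le ext)
qed

definition coeff :: "nat \<Rightarrow> 't \<Rightarrow> 't" where
  "coeff i t = (SOME c. \<exists>n. skew_rep c n t) i"

lemma skew_rep_coeff: "\<exists>n. skew_rep (\<lambda>i. coeff i t) n t"
  using someI_ex[OF skew_rep_exists[of t]] unfolding coeff_def by simp

lemma coeff_eq: "skew_rep c n t \<Longrightarrow> coeff i t = c i"
  using skew_rep_coeff[of t] skew_rep_unique by metis

lemma coeff_R: "coeff i t \<in> R"
  using skew_rep_coeff[of t] unfolding skew_rep_def by auto

lemma coeff_add: "coeff i (a + b) = coeff i a + coeff i b"
proof -
  obtain n m where "skew_rep (\<lambda>i. coeff i a) n a" "skew_rep (\<lambda>i. coeff i b) m b"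
    using skew_rep_coeff by blast
  then have "skew_rep (\<lambda>i. coeff i a) (max n m) a" "skew_rep (\<lambda>i. coeff i b) (max n m) b"
    using skew_rep_mono by auto
  then have "skew_rep (\<lambda>i. coeff i a + coeff i b) (max n m) (a + b)"
    unfolding skew_rep_def by (auto simp: R_add sum.distrib distrib_right)
  then show ?thesis by (rule coeff_eq)
qed

lemma coeff_left_mult: "r \<in> R \<Longrightarrow> coeff i (r * t) = r * coeff i t"
proof -
  assume r: "r \<in> R"
  obtain n where n: "skew_rep (\<lambda>i. coeff i t) n t" using skew_rep_coeff by blast
  have "r * t = r * (\<Sum>i<n. coeff i t * x ^ i)" using n unfolding skew_rep_def by metis
  also have "\<dots> = (\<Sum>i<n. (r * coeff i t) * x ^ i)" by (simp add: sum_distrib_left mult.assoc)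
  finally have "skew_rep (\<lambda>i. r * coeff i t) n (r * t)"
    using n r unfolding skew_rep_def by (auto simp: R_mult)
  then show ?thesis by (rule coeff_eq)
qed

lemma coeff_scale: "coeff i (sc k a) = sc k (coeff i a)"
  using coeff_left_mult[of "sc k 1" i a] by (simp add: scale_mult_left[symmetric] R_scale)

lemma coeff_linear: "Vector_Spaces.linear sc sc (coeff i)"
  by (simp add: Vector_Spaces.linear_iff coeff_add coeff_scale vector_space_T)

lemma coeff_zero [simp]: "coeff i 0 = 0"
  and coeff_sum: "coeff i (\<Sum>j\<in>I. f j) = (\<Sum>j\<in>I. coeff i (f j))"
  using linear_map_zero[OF coeff_linear] linear_map_sum[OF coeff_linear] .

lemma coeff_monom: "r \<in> R \<Longrightarrow> coeff i (r * x ^ j) = (if i = j then r else 0)"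
proof -
  assume r: "r \<in> R"
  have "(\<Sum>k<Suc j. (if k = j then r else 0) * x ^ k) = r * x ^ j"
    by (subst sum.mono_neutral_right[of "{..<Suc j}" "{j}"]) auto
  then have "skew_rep (\<lambda>k. if k = j then r else 0) (Suc j) (r * x ^ j)"
    using r unfolding skew_rep_def by auto
  then show ?thesis by (rule coeff_eq)
qed

lemma coeff_R_elem: "r \<in> R \<Longrightarrow> coeff i r = (if i = 0 then r else 0)"
  using coeff_monom[of r i 0] by simp

lemma coeff_mult_x: "coeff i (t * x) = (if i = 0 then 0 else coeff (i - 1) t)"
proof -
  obtain n where n: "skew_rep (\<lambda>i. coeff i t) n t" using skew_rep_coeff by blast
  have "t * x = (\<Sum>k<n. coeff k t * x ^ k) * x" using n unfolding skew_rep_def by metis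
  also have "\<dots> = (\<Sum>k<n. coeff k t * x ^ Suc k)"
    by (simp add: sum_distrib_right mult.assoc power_commutes)
  also have "\<dots> = (\<Sum>k<Suc n. (if k = 0 then 0 else coeff (k - 1) t) * x ^ k)"
    by (subst sum.lessThan_Suc_shift) simp
  finally have "skew_rep (\<lambda>k. if k = 0 then 0 else coeff (k - 1) t) (Suc n) (t * x)"
    using n unfolding skew_rep_def by auto
  then show ?thesis by (rule coeff_eq)
qed

lemma coeff_x_mult: "coeff i (x * t) = (if i = 0 then 0 else \<sigma> (coeff (i - 1) t)) + \<delta> (coeff i t)"
proof -
  obtain n where n: "skew_rep (\<lambda>i. coeff i t) n t" using skew_rep_coeff by blast
  have "x * t = x * (\<Sum>k<n. coeff k t * x ^ k)" using n unfolding skew_rep_def by metis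
  also have "\<dots> = (\<Sum>k<n. (\<sigma> (coeff k t) * x + \<delta> (coeff k t)) * x ^ k)"
    by (simp add: sum_distrib_left mult.assoc[symmetric] x_mult_R coeff_R)
  also have "\<dots> = (\<Sum>k<n. \<sigma> (coeff k t) * x ^ k) * x + (\<Sum>k<n. \<delta> (coeff k t) * x ^ k)"
    by (simp add: sum_distrib_right distrib_right sum.distrib mult.assoc power_commutes)
  finally have xt: "x * t = \<dots>" .
  have s: "coeff j (\<Sum>k<n. \<sigma> (coeff k t) * x ^ k) = \<sigma> (coeff j t)" for j
    by (rule coeff_eq) (use n in \<open>auto simp: skew_rep_def sigma_R\<close>)
  have d: "coeff j (\<Sum>k<n. \<delta> (coeff k t) * x ^ k) = \<delta> (coeff j t)" for j
    by (rule coeff_eq) (use n in \<open>auto simp: skew_rep_def delta_R\<close>)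
  show ?thesis unfolding xt coeff_add coeff_mult_x s d by simp
qed

definition deg_le :: "nat \<Rightarrow> 't \<Rightarrow> bool" where
  "deg_le n t \<longleftrightarrow> (\<forall>k>n. coeff k t = 0)"

lemma deg_le_exists: "\<exists>n. deg_le n t"
  using skew_rep_coeff[of t] unfolding skew_rep_def deg_le_def by (meson less_imp_le)

lemma deg_le_mono: "deg_le m t \<Longrightarrow> m \<le> n \<Longrightarrow> deg_le n t"
  unfolding deg_le_def by auto

lemma deg_le_monom: "r \<in> R \<Longrightarrow> j \<le> n \<Longrightarrow> deg_le n (r * x ^ j)"
  unfolding deg_le_def by (simp add: coeff_monom)

lemma deg_le_expand: "deg_le n t \<Longrightarrow> t = (\<Sum>k<Suc n. coeff k t * x ^ k)"
proof -
  assume t: "deg_le n t"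
  obtain m where "skew_rep (\<lambda>i. coeff i t) m t" using skew_rep_coeff by blast
  then have "t = (\<Sum>k<max m (Suc n). coeff k t * x ^ k)"
    using skew_rep_mono[of _ m t "max m (Suc n)"] unfolding skew_rep_def by auto
  also have "\<dots> = (\<Sum>k<Suc n. coeff k t * x ^ k)"
    using t unfolding deg_le_def by (intro sum.mono_neutral_right) auto
  finally show ?thesis .
qed

lemma deg_le_x_mult: "deg_le m t \<Longrightarrow> deg_le (Suc m) (x * t) \<and> coeff (Suc m) (x * t) = \<sigma> (coeff m t)"
  unfolding deg_le_def by (auto simp: coeff_x_mult)

lemma deg_le_x_power_mult:
  "deg_le m t \<Longrightarrow> deg_le (m + i) (x ^ i * t) \<and> coeff (m + i) (x ^ i * t) = (\<sigma> ^^ i) (coeff m t)"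
proof (induction i)
  case 0
  then show ?case by simp
next
  case (Suc i)
  have "x ^ Suc i * t = x * (x ^ i * t)" by (simp add: mult.assoc)
  then show ?case using deg_le_x_mult[of "m + i" "x ^ i * t"] Suc by auto
qed

lemma deg_le_mult:
  assumes t: "deg_le m t" and t': "deg_le n t'"
  shows "deg_le (m + n) (t * t') \<and> coeff (m + n) (t * t') = coeff m t * (\<sigma> ^^ m) (coeff n t')"
proof -
  have tt': "t * t' = (\<Sum>i<Suc m. coeff i t * (x ^ i * t'))"
    by (subst deg_le_expand[OF t]) (simp only: sum_distrib_right mult.assoc)
  have c: "coeff k (t * t') = (\<Sum>i<Suc m. coeff i t * coeff k (x ^ i * t'))" for k
    unfolding tt' coeff_sum by (simp add: coeff_left_mult coeff_R)
  have z: "coeff k (x ^ i * t') = 0" if "k > n + i" for k i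
    using deg_le_x_power_mult[OF t', of i] that unfolding deg_le_def by auto
  have "deg_le (m + n) (t * t')"
    unfolding deg_le_def c using z by (auto intro!: sum.neutral)
  moreover have "coeff (m + n) (t * t') = coeff m t * coeff (m + n) (x ^ m * t')"
    unfolding c by (simp add: z)
  ultimately show ?thesis using deg_le_x_power_mult[OF t', of m] by (simp add: add.commute)
qed

lemma deg_le_monom_mult:
  assumes "r \<in> R" "r' \<in> R"
  shows "deg_le (i + j) ((r * x ^ i) * (r' * x ^ j)) \<and>
    coeff (i + j) ((r * x ^ i) * (r' * x ^ j)) = r * (\<sigma> ^^ i) r'"
  using deg_le_mult[OF deg_le_monom[OF assms(1) order_refl] deg_le_monom[OF assms(2) order_refl]] assms
  by (simp add: coeff_monom)

lemma sigma_power_R: "a \<in> R \<Longrightarrow> (\<sigma> ^^ i) a \<in> R"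
  by (induction i) (auto simp: sigma_R)

lemma sigma_power_add: "a \<in> R \<Longrightarrow> b \<in> R \<Longrightarrow> (\<sigma> ^^ i) (a + b) = (\<sigma> ^^ i) a + (\<sigma> ^^ i) b"
  by (induction i) (auto simp: sigma_add sigma_power_R)

lemma sigma_power_scale: "a \<in> R \<Longrightarrow> (\<sigma> ^^ i) (sc k a) = sc k ((\<sigma> ^^ i) a)"
  by (induction i) (auto simp: sigma_scale sigma_power_R)

definition sigma_inv :: "'t \<Rightarrow> 't" where
  "sigma_inv = the_inv_into R \<sigma>"

lemma sigma_inv_R: "a \<in> R \<Longrightarrow> sigma_inv a \<in> R"
  and sigma_inv_sigma: "a \<in> R \<Longrightarrow> sigma_inv (\<sigma> a) = a"
  and sigma_sigma_inv: "a \<in> R \<Longrightarrow> \<sigma> (sigma_inv a) = a"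
  unfolding sigma_inv_def using sigma_bij
  by (auto simp: bij_betw_def the_inv_into_into the_inv_into_f_f f_the_inv_into_f)

lemma sigma_inv_add: "a \<in> R \<Longrightarrow> b \<in> R \<Longrightarrow> sigma_inv (a + b) = sigma_inv a + sigma_inv b"
  by (metis R_add sigma_add sigma_inv_R sigma_inv_sigma sigma_sigma_inv)

lemma sigma_inv_scale: "a \<in> R \<Longrightarrow> sigma_inv (sc k a) = sc k (sigma_inv a)"
  by (metis R_scale sigma_scale sigma_inv_R sigma_inv_sigma sigma_sigma_inv)

lemma sigma_inv_power_R: "a \<in> R \<Longrightarrow> (sigma_inv ^^ i) a \<in> R"
  by (induction i) (auto simp: sigma_inv_R)

lemma sigma_inv_power_add:
  "a \<in> R \<Longrightarrow> b \<in> R \<Longrightarrow> (sigma_inv ^^ i) (a + b) = (sigma_inv ^^ i) a + (sigma_inv ^^ i) b"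
  by (induction i) (auto simp: sigma_inv_add sigma_inv_power_R)

lemma sigma_inv_power_scale: "a \<in> R \<Longrightarrow> (sigma_inv ^^ i) (sc k a) = sc k ((sigma_inv ^^ i) a)"
  by (induction i) (auto simp: sigma_inv_scale sigma_inv_power_R)

lemma sigma_inv_power_sigma_power: "a \<in> R \<Longrightarrow> (sigma_inv ^^ i) ((\<sigma> ^^ i) a) = a"
proof (induction i arbitrary: a)
  case 0
  then show ?case by simp
next
  case (Suc i)
  have "(sigma_inv ^^ Suc i) ((\<sigma> ^^ Suc i) a) = (sigma_inv ^^ i) (sigma_inv (\<sigma> ((\<sigma> ^^ i) a)))"
    by (simp add: funpow_swap1)
  also have "\<dots> = a" using Suc by (simp add: sigma_inv_sigma sigma_power_R)
  finally show ?case .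
qed

text \<open>\<sigma> is only given on R; precomposing with the projection coeff 0 onto R makes it linear on T.\<close>

lemma linear_sigma_power_coeff0: "Vector_Spaces.linear sc sc (\<lambda>t. (\<sigma> ^^ i) (coeff 0 t))"
  by (simp add: Vector_Spaces.linear_iff vector_space_T coeff_add coeff_scale
      sigma_power_add sigma_power_scale coeff_R)

lemma linear_sigma_inv_power_coeff0: "Vector_Spaces.linear sc sc (\<lambda>t. (sigma_inv ^^ i) (coeff 0 t))"
  by (simp add: Vector_Spaces.linear_iff vector_space_T coeff_add coeff_scale
      sigma_inv_power_add sigma_inv_power_scale coeff_R)

subsection \<open>Coefficients in T \<otimes> T\<close>

lemma tensor_map_exists:
  assumes "Vector_Spaces.linear sc sc f" "Vector_Spaces.linear sc sc g"
  shows "\<exists>L. Vector_Spaces.linear scU scU L \<and> (\<forall>v w. L (tens v w) = tens (f v) (g w))"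
  by (rule is_tensor_lift[OF tensor_T vector_space_U])
     (use linear_map_comp[OF assms(1) tens_linear_left] linear_map_comp[OF assms(2) tens_linear_right]
      in auto)

definition tensor_map :: "('t \<Rightarrow> 't) \<Rightarrow> ('t \<Rightarrow> 't) \<Rightarrow> 'u \<Rightarrow> 'u" where
  "tensor_map f g = (SOME L. Vector_Spaces.linear scU scU L \<and> (\<forall>v w. L (tens v w) = tens (f v) (g w)))"

lemma tensor_map:
  assumes "Vector_Spaces.linear sc sc f" "Vector_Spaces.linear sc sc g"
  shows "Vector_Spaces.linear scU scU (tensor_map f g)" "tensor_map f g (tens v w) = tens (f v) (g w)"
  using someI_ex[OF tensor_map_exists[OF assms]] unfolding tensor_map_def by blast+

lemma linear_mult_right: "Vector_Spaces.linear scU scU (\<lambda>u. u * v)"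
  by (simp add: Vector_Spaces.linear_iff vector_space_U distrib_right scaleU_mult_left)

lemma linear_mult_left: "Vector_Spaces.linear scU scU (\<lambda>v. u * v)"
  by (simp add: Vector_Spaces.linear_iff vector_space_U distrib_left scaleU_mult_right)

lemma RR_tens: "r \<in> R \<Longrightarrow> s \<in> R \<Longrightarrow> tens r s \<in> RR"
  unfolding tensor_sub_def by (rule U.span_base) auto

lemma RR_one: "1 \<in> RR"
  using RR_tens[of 1 1] tens_one by simp

lemma RR_induct [consumes 1, case_names zero step]:
  assumes "a \<in> RR" "P 0" "\<And>c r s y. r \<in> R \<Longrightarrow> s \<in> R \<Longrightarrow> P y \<Longrightarrow> P (scU c (tens r s) + y)"
  shows "P a"
  using assms(1) unfolding tensor_sub_def
  by (induction rule: U.span_induct_alt) (use assms(2,3) in auto)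

lemma tensor_induct [case_names zero step]:
  assumes "P 0" "\<And>c v w y. P y \<Longrightarrow> P (scU c (tens v w) + y)"
  shows "P u"
proof -
  have "u \<in> module.span scU (case_prod tens ` UNIV)" using is_tensor_span[OF tensor_T] by simp
  then show ?thesis by (induction rule: U.span_induct_alt) (use assms in auto)
qed

lemma linear_into_RR:
  assumes "Vector_Spaces.linear scU scU L" "\<And>v w. L (tens v w) \<in> RR"
  shows "L u \<in> RR"
  unfolding tensor_sub_def
  by (induction u rule: tensor_induct)
     (use assms[unfolded tensor_sub_def] in \<open>auto simp: linear_map_add[OF assms(1)]
       linear_map_scale[OF assms(1)] linear_map_zero[OF assms(1)] U.span_zero U.span_add U.span_scale\<close>)

definition tcoeff :: "nat \<times> nat \<Rightarrow> 'u \<Rightarrow> 'u" where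
  "tcoeff p = tensor_map (coeff (fst p)) (coeff (snd p))"

lemma tcoeff_linear: "Vector_Spaces.linear scU scU (tcoeff p)"
  and tcoeff_tens: "tcoeff p (tens v w) = tens (coeff (fst p) v) (coeff (snd p) w)"
  unfolding tcoeff_def using tensor_map[OF coeff_linear coeff_linear] by blast+

lemma tcoeff_zero [simp]: "tcoeff p 0 = 0"
  by (rule linear_map_zero[OF tcoeff_linear])

lemma tcoeff_RR: "tcoeff p u \<in> RR"
  by (rule linear_into_RR[OF tcoeff_linear]) (auto simp: tcoeff_tens coeff_R RR_tens)

definition tmonom :: "'u \<Rightarrow> nat \<times> nat \<Rightarrow> 'u" where
  "tmonom a p = a * tens (x ^ fst p) (x ^ snd p)"

lemma tmonom_zero [simp]: "tmonom 0 p = 0"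
  by (simp add: tmonom_def)

lemma tmonom_linear: "Vector_Spaces.linear scU scU (\<lambda>a. tmonom a p)"
  unfolding tmonom_def by (rule linear_mult_right)

abbreviation square :: "nat \<Rightarrow> (nat \<times> nat) set" where
  "square N \<equiv> {..<N} \<times> {..<N}"

definition expands :: "nat \<Rightarrow> 'u \<Rightarrow> bool" where
  "expands N u \<longleftrightarrow> (\<forall>p. N \<le> fst p \<or> N \<le> snd p \<longrightarrow> tcoeff p u = 0) \<and>
     u = (\<Sum>p\<in>square N. tmonom (tcoeff p u) p)"

lemma expands_mono: "expands N u \<Longrightarrow> N \<le> N' \<Longrightarrow> expands N' u"
proof -
  assume u: "expands N u" "N \<le> N'"
  have "tmonom (tcoeff p u) p = 0" if "p \<in> square N' - square N" for p
    using u that unfolding expands_def by (cases p) auto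
  then have "(\<Sum>p\<in>square N. tmonom (tcoeff p u) p) = (\<Sum>p\<in>square N'. tmonom (tcoeff p u) p)"
    using u by (intro sum.mono_neutral_left) auto
  then show ?thesis using u unfolding expands_def by auto
qed

lemma expands_tens: "\<exists>N. expands N (tens v w)"
proof -
  obtain n1 n2 where "deg_le n1 v" "deg_le n2 w" using deg_le_exists by blast
  then have deg: "deg_le (max n1 n2) v" "deg_le (max n1 n2) w" using deg_le_mono by auto
  define N where "N = Suc (max n1 n2)"
  have "tens v w = tens (\<Sum>i<N. coeff i v * x ^ i) (\<Sum>i<N. coeff i w * x ^ i)"
    using deg_le_expand[OF deg(1)] deg_le_expand[OF deg(2)] unfolding N_def by metis
  also have "\<dots> = (\<Sum>i<N. \<Sum>j<N. tens (coeff i v * x ^ i) (coeff j w * x ^ j))"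
    by (simp only: tens_sum_left, simp only: tens_sum_right)
  also have "\<dots> = (\<Sum>p\<in>square N. tmonom (tcoeff p (tens v w)) p)"
    by (simp add: sum.cartesian_product tmonom_def tcoeff_tens tens_mult case_prod_beta)
  finally have "tens v w = \<dots>" .
  moreover have "tcoeff p (tens v w) = 0" if "N \<le> fst p \<or> N \<le> snd p" for p
  proof -
    have "max n1 n2 < fst p \<or> max n1 n2 < snd p" using that unfolding N_def by auto
    then have "coeff (fst p) v = 0 \<or> coeff (snd p) w = 0" using deg unfolding deg_le_def by blast
    then show ?thesis by (auto simp: tcoeff_tens)
  qed
  ultimately show ?thesis unfolding expands_def by blast
qed

lemma expands_exists: "\<exists>N. expands N u"
proof (induction u rule: tensor_induct)
  case zero
  have "expands 0 0" unfolding expands_def by simp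
  then show ?case by blast
next
  case (step c v w y)
  obtain N1 N2 where "expands N1 (tens v w)" "expands N2 y" using expands_tens step by blast
  then have e: "expands (max N1 N2) (tens v w)" "expands (max N1 N2) y" using expands_mono by auto
  let ?u = "scU c (tens v w) + y"
  have k: "tcoeff p ?u = scU c (tcoeff p (tens v w)) + tcoeff p y" for p
    by (simp add: linear_map_add[OF tcoeff_linear] linear_map_scale[OF tcoeff_linear])
  have t: "tmonom (tcoeff p ?u) p = scU c (tmonom (tcoeff p (tens v w)) p) + tmonom (tcoeff p y) p" for p
    unfolding k by (simp add: linear_map_add[OF tmonom_linear] linear_map_scale[OF tmonom_linear])
  have "?u = scU c (\<Sum>p\<in>square (max N1 N2). tmonom (tcoeff p (tens v w)) p) +
      (\<Sum>p\<in>square (max N1 N2). tmonom (tcoeff p y) p)"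
    using e unfolding expands_def by auto
  also have "\<dots> = (\<Sum>p\<in>square (max N1 N2). tmonom (tcoeff p ?u) p)"
    unfolding t by (simp add: sum.distrib U.scale_sum_right)
  finally have "expands (max N1 N2) ?u" using e unfolding expands_def k by auto
  then show ?case by blast
qed

lemma tcoeff_tmonom: "a \<in> RR \<Longrightarrow> tcoeff q (tmonom a p) = (if q = p then a else 0)"
proof (induction a rule: RR_induct)
  case zero
  then show ?case by simp
next
  case (step c r s y)
  have "tmonom (scU c (tens r s) + y) p = scU c (tens (r * x ^ fst p) (s * x ^ snd p)) + tmonom y p"
    by (simp add: tmonom_def distrib_right scaleU_mult_left[symmetric] tens_mult)
  then show ?case using step
    by (auto simp: linear_map_add[OF tcoeff_linear] linear_map_scale[OF tcoeff_linear]
        tcoeff_tens coeff_monom prod_eq_iff)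
qed

lemma tcoeff_RR_elem: "a \<in> RR \<Longrightarrow> tcoeff q a = (if q = (0, 0) then a else 0)"
  using tcoeff_tmonom[of a q "(0, 0)"] by (simp add: tmonom_def tens_one)

subsection \<open>Leading terms in T \<otimes> T\<close>

definition twist :: "nat \<times> nat \<Rightarrow> 'u \<Rightarrow> 'u" where
  "twist p = tensor_map (\<lambda>t. (\<sigma> ^^ fst p) (coeff 0 t)) (\<lambda>t. (\<sigma> ^^ snd p) (coeff 0 t))"

lemma twist_linear: "Vector_Spaces.linear scU scU (twist p)"
  and twist_tens: "twist p (tens v w) = tens ((\<sigma> ^^ fst p) (coeff 0 v)) ((\<sigma> ^^ snd p) (coeff 0 w))"
  unfolding twist_def using tensor_map[OF linear_sigma_power_coeff0 linear_sigma_power_coeff0] by blast+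

lemma twist_tens_R: "r \<in> R \<Longrightarrow> s \<in> R \<Longrightarrow> twist p (tens r s) = tens ((\<sigma> ^^ fst p) r) ((\<sigma> ^^ snd p) s)"
  by (simp add: twist_tens coeff_R_elem)

lemma twist_RR: "twist p u \<in> RR"
  by (rule linear_into_RR[OF twist_linear]) (auto simp: twist_tens coeff_R RR_tens sigma_power_R)

lemma twist_zero_RR: "a \<in> RR \<Longrightarrow> twist (0, 0) a = a"
proof (induction a rule: RR_induct)
  case zero
  then show ?case by (rule linear_map_zero[OF twist_linear])
next
  case (step c r s y)
  then show ?case
    by (simp add: linear_map_add[OF twist_linear] linear_map_scale[OF twist_linear] twist_tens_R)
qed

lemma twist_eq_0D:
  assumes a: "a \<in> RR" and z: "twist p a = 0"
  shows "a = 0"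
proof -
  define L where "L = tensor_map (\<lambda>t. (sigma_inv ^^ fst p) (coeff 0 t)) (\<lambda>t. (sigma_inv ^^ snd p) (coeff 0 t))"
  have L: "Vector_Spaces.linear scU scU L"
    "L (tens v w) = tens ((sigma_inv ^^ fst p) (coeff 0 v)) ((sigma_inv ^^ snd p) (coeff 0 w))" for v w
    unfolding L_def using tensor_map[OF linear_sigma_inv_power_coeff0 linear_sigma_inv_power_coeff0]
    by blast+
  interpret pp: vector_space_pair scU scU using vector_space_pairI[OF vector_space_U vector_space_U] .
  have "L (twist p a) = id a"
  proof (rule pp.linear_eq_on[where B="case_prod tens ` (R \<times> R)" and f="\<lambda>a. L (twist p a)"
        and g=id and x=a])
    show "Vector_Spaces.linear scU scU (\<lambda>a. L (twist p a))" by (rule linear_map_comp[OF twist_linear L(1)])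
    show "Vector_Spaces.linear scU scU id" by (rule U.linear_id)
    show "a \<in> module.span scU (case_prod tens ` (R \<times> R))" using a unfolding tensor_sub_def .
    show "L (twist p b) = id b" if "b \<in> case_prod tens ` (R \<times> R)" for b
      using that by (auto simp: twist_tens_R L(2) coeff_R_elem sigma_power_R sigma_inv_power_sigma_power)
  qed
  then show ?thesis using z linear_map_zero[OF L(1)] by simp
qed

text \<open>Both sides are bilinear in (a, b), so it suffices to compare them on pure tensors of
  elements of R.\<close>

lemma tcoeff_tmonom_mult:
  assumes a: "a \<in> RR" and b: "b \<in> RR"
  shows "\<not> q \<le> p + p' \<Longrightarrow> tcoeff q (tmonom a p * tmonom b p') = 0"
    and "tcoeff (p + p') (tmonom a p * tmonom b p') = a * twist p b"
proof -
  let ?B = "case_prod tens ` (R \<times> R)"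
  have span: "a \<in> module.span scU ?B" "b \<in> module.span scU ?B"
    using a b unfolding tensor_sub_def by auto
  have l1: "Vector_Spaces.linear scU scU (\<lambda>a. tcoeff r (tmonom a p * Y))" for r Y
    by (intro linear_map_comp[OF tmonom_linear] linear_map_comp[OF linear_mult_right tcoeff_linear])
  have l2: "Vector_Spaces.linear scU scU (\<lambda>b. tcoeff r (X * tmonom b p'))" for r X
    by (intro linear_map_comp[OF tmonom_linear] linear_map_comp[OF linear_mult_left tcoeff_linear])
  have l0: "Vector_Spaces.linear scU scU (\<lambda>_. 0)"
    by (simp add: Vector_Spaces.linear_iff vector_space_U)
  have pure: "tmonom (tens r s) p * tmonom (tens r' s') p' =
      tens ((r * x ^ fst p) * (r' * x ^ fst p')) ((s * x ^ snd p) * (s' * x ^ snd p'))" for r s r' s'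
    by (simp add: tmonom_def tens_mult mult.assoc)
  show "tcoeff q (tmonom a p * tmonom b p') = 0" if nq: "\<not> q \<le> p + p'"
  proof (rule linear_eq_on_span2[OF vector_space_U _ _ _ _ _ span,
        where F="\<lambda>a b. tcoeff q (tmonom a p * tmonom b p')" and G="\<lambda>_ _. 0"], (rule l1 l2 l0)+)
    fix a b assume "a \<in> ?B" "b \<in> ?B"
    then obtain r s r' s' where rs: "r \<in> R" "s \<in> R" "r' \<in> R" "s' \<in> R" "a = tens r s" "b = tens r' s'"
      by auto
    have "fst q > fst p + fst p' \<or> snd q > snd p + snd p'" using nq by (auto simp: less_eq_prod_def)
    then show "tcoeff q (tmonom a p * tmonom b p') = 0"
      using deg_le_monom_mult[OF rs(1,3), of "fst p" "fst p'"]
        deg_le_monom_mult[OF rs(2,4), of "snd p" "snd p'"]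
      unfolding rs(5,6) pure tcoeff_tens deg_le_def by auto
  qed
  show "tcoeff (p + p') (tmonom a p * tmonom b p') = a * twist p b"
  proof (rule linear_eq_on_span2[OF vector_space_U _ _ _ _ _ span,
        where F="\<lambda>a b. tcoeff (p + p') (tmonom a p * tmonom b p')" and G="\<lambda>a b. a * twist p b"],
      (rule l1 l2 linear_mult_right linear_map_comp[OF twist_linear linear_mult_left])+)
    fix a b assume "a \<in> ?B" "b \<in> ?B"
    then obtain r s r' s' where rs: "r \<in> R" "s \<in> R" "r' \<in> R" "s' \<in> R" "a = tens r s" "b = tens r' s'"
      by auto
    show "tcoeff (p + p') (tmonom a p * tmonom b p') = a * twist p b"
      using deg_le_monom_mult[OF rs(1,3), of "fst p" "fst p'"]
        deg_le_monom_mult[OF rs(2,4), of "snd p" "snd p'"]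
      unfolding rs(5,6) pure tcoeff_tens by (simp add: twist_tens_R rs tens_mult)
  qed
qed

definition lex_bounded :: "bool \<Rightarrow> 'u \<Rightarrow> nat \<times> nat \<Rightarrow> bool" where
  "lex_bounded b u m \<longleftrightarrow> (\<forall>r. lex_less b m r \<longrightarrow> tcoeff r u = 0)"

lemma expands_common: "\<exists>N. K \<le> N \<and> expands N u \<and> expands N v"
proof -
  obtain N1 N2 where "expands N1 u" "expands N2 v" using expands_exists by blast
  then show ?thesis using expands_mono by (intro exI[of _ "max K (max N1 N2)"]) auto
qed

lemma tcoeff_mult_sum:
  assumes "expands N u" "expands N v"
  shows "tcoeff r (u * v) =
    (\<Sum>p\<in>square N. \<Sum>p'\<in>square N. tcoeff r (tmonom (tcoeff p u) p * tmonom (tcoeff p' v) p'))"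
proof -
  have "u * v = (\<Sum>p\<in>square N. tmonom (tcoeff p u) p) * (\<Sum>p\<in>square N. tmonom (tcoeff p v) p)"
    using assms unfolding expands_def by metis
  then show ?thesis by (simp add: sum_product linear_map_sum[OF tcoeff_linear])
qed

lemma tcoeff_tmonom_mult_nonzeroD:
  assumes "tcoeff r (tmonom (tcoeff p u) p * tmonom (tcoeff p' v) p') \<noteq> 0"
  shows "r \<le> p + p'" "tcoeff p u \<noteq> 0" "tcoeff p' v \<noteq> 0"
proof -
  show "r \<le> p + p'" using assms tcoeff_tmonom_mult(1)[OF tcoeff_RR tcoeff_RR] by blast
  show "tcoeff p u \<noteq> 0" "tcoeff p' v \<noteq> 0" using assms by auto
qed

lemma lex_bounded_mult:
  assumes u: "lex_bounded b u m" and v: "lex_bounded b v n"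
  shows "lex_bounded b (u * v) (m + n)"
  unfolding lex_bounded_def
proof (intro allI impI)
  fix r assume r: "lex_less b (m + n) r"
  obtain N where N: "expands N u" "expands N v" using expands_common by blast
  have "tcoeff r (tmonom (tcoeff p u) p * tmonom (tcoeff p' v) p') = 0" for p p'
  proof (rule ccontr)
    assume h: "tcoeff r (tmonom (tcoeff p u) p * tmonom (tcoeff p' v) p') \<noteq> 0"
    then have "\<not> lex_less b (m + n) (p + p')"
      using u v lex_less_add_mono tcoeff_tmonom_mult_nonzeroD(2,3)[OF h] unfolding lex_bounded_def by blast
    then show False
      using le_imp_eq_or_lex_less[OF tcoeff_tmonom_mult_nonzeroD(1)[OF h], of b] r
        lex_less_trans[OF r, of "p + p'"] by (cases "r = p + p'") auto
  qed
  then show "tcoeff r (u * v) = 0" unfolding tcoeff_mult_sum[OF N] by simp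
qed

text \<open>No other product of monomials reaches the exponent m + n, by strict monotonicity of the
  lexicographic order.\<close>

lemma tcoeff_lead_mult:
  assumes u: "lex_bounded b u m" and v: "lex_bounded b v n"
  shows "tcoeff (m + n) (u * v) = tcoeff m u * twist m (tcoeff n v)"
proof -
  obtain N where N: "Suc (max (max (fst m) (snd m)) (max (fst n) (snd n))) \<le> N"
    "expands N u" "expands N v"
    using expands_common by blast
  have mn: "(m, n) \<in> square N \<times> square N" using N(1) by (cases m; cases n) auto
  define F where "F z = tcoeff (m + n) (tmonom (tcoeff (fst z) u) (fst z) * tmonom (tcoeff (snd z) v) (snd z))"
    for z
  have F0: "F z = 0" if "z \<noteq> (m, n)" for z
  proof (rule ccontr)
    assume h: "F z \<noteq> 0"
    note nz = tcoeff_tmonom_mult_nonzeroD[OF h[unfolded F_def]]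
    have "lex_less b (fst z + snd z) (m + n)"
      using u v that nz(2,3) lex_less_add_strict unfolding lex_bounded_def by (metis prod.collapse)
    then show False using le_imp_eq_or_lex_less[OF nz(1), of b] lex_less_asym lex_less_irrefl by metis
  qed
  have "tcoeff (m + n) (u * v) = (\<Sum>z\<in>square N \<times> square N. F z)"
    unfolding tcoeff_mult_sum[OF N(2,3)] sum.cartesian_product F_def by (simp add: case_prod_beta)
  also have "\<dots> = F (m, n) + (\<Sum>z\<in>square N \<times> square N - {(m, n)}. F z)"
    by (rule sum.remove[OF _ mn]) simp
  also have "\<dots> = F (m, n)" using F0 by (subst sum.neutral) auto
  also have "\<dots> = tcoeff m u * twist m (tcoeff n v)"
    unfolding F_def by (simp add: tcoeff_tmonom_mult(2)[OF tcoeff_RR tcoeff_RR])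
  finally show ?thesis .
qed

lemma lex_bounded_RR: "a \<in> RR \<Longrightarrow> lex_bounded b a (0, 0) \<and> tcoeff (0, 0) a = a"
  using tcoeff_RR_elem lex_less_irrefl unfolding lex_bounded_def by auto

text \<open>Since R \<otimes> R is a domain and twists are injective, leading terms of powers cannot cancel.\<close>

lemma lex_bounded_power:
  assumes u: "lex_bounded b u m" and c: "tcoeff m u \<noteq> 0"
  shows "lex_bounded b (u ^ k) (k * fst m, k * snd m) \<and> tcoeff (k * fst m, k * snd m) (u ^ k) \<noteq> 0"
proof (induction k)
  case 0
  then show ?case using lex_bounded_RR[OF RR_one] one_neq_zero_U by simp
next
  case (Suc k)
  have m: "(Suc k * fst m, Suc k * snd m) = m + (k * fst m, k * snd m)" by (cases m) simp
  have "twist m (tcoeff (k * fst m, k * snd m) (u ^ k)) \<noteq> 0"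
    using twist_eq_0D[OF tcoeff_RR] Suc by blast
  then have "tcoeff m u * twist m (tcoeff (k * fst m, k * snd m) (u ^ k)) \<noteq> 0"
    using RR_no_zero_divisors[OF tcoeff_RR twist_RR c] by blast
  then show ?case
    using lex_bounded_mult[OF u Suc[THEN conjunct1]] tcoeff_lead_mult[OF u Suc[THEN conjunct1]]
    unfolding m by simp
qed

lemma lex_bounded_RR_mult:
  assumes a: "a \<in> RR" and u: "lex_bounded b u m"
  shows "lex_bounded b (a * u) m \<and> tcoeff m (a * u) = a * tcoeff m u"
proof -
  have m: "(0, 0) + m = m" by (cases m) simp
  show ?thesis
    using lex_bounded_mult[OF lex_bounded_RR[OF a, THEN conjunct1] u]
      tcoeff_lead_mult[OF lex_bounded_RR[OF a, THEN conjunct1] u]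
    unfolding m by (simp add: lex_bounded_RR[OF a] twist_zero_RR[OF tcoeff_RR])
qed

lemma tsum_exists: "\<exists>l. u = tsum tens l"
proof (induction u rule: tensor_induct)
  case zero
  then show ?case by (intro exI[of _ "[]"]) simp
next
  case (step c v w y)
  then obtain l where "y = tsum tens l" by blast
  then show ?case by (intro exI[of _ "(sc c v, w) # l"]) (simp add: tens_scale_left)
qed

lemma RR_tsum: "a \<in> RR \<Longrightarrow> \<exists>l. set l \<subseteq> R \<times> R \<and> a = tsum tens l"
proof (induction a rule: RR_induct)
  case zero
  then show ?case by (intro exI[of _ "[]"]) simp
next
  case (step c r s y)
  then obtain l where "set l \<subseteq> R \<times> R" "y = tsum tens l" by blast
  then show ?case using step by (intro exI[of _ "(sc c r, s) # l"]) (simp add: tens_scale_left R_scale)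
qed

lemma tmonom_tsum:
  "tmonom (tsum tens l) p = tsum tens (map (\<lambda>z. (fst z * x ^ fst p, snd z * x ^ snd p)) l)"
  by (induction l) (auto simp: tmonom_def distrib_right tens_mult)

lemma tsum_deg_le_exists:
  assumes bound: "\<And>p. tcoeff p u \<noteq> 0 \<Longrightarrow> fst p \<le> D1 \<and> snd p \<le> D2"
  shows "\<exists>ps. u = tsum tens ps \<and> (\<forall>z\<in>set ps. deg_le D1 (fst z) \<and> deg_le D2 (snd z))"
proof -
  let ?Q = "{z. deg_le D1 (fst z) \<and> deg_le D2 (snd z)}"
  obtain N where N: "expands N u" using expands_exists by blast
  let ?S = "{p \<in> square N. tcoeff p u \<noteq> 0}"
  have "u = (\<Sum>p\<in>square N. tmonom (tcoeff p u) p)" using N unfolding expands_def by blast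
  also have "\<dots> = (\<Sum>p\<in>?S. tmonom (tcoeff p u) p)" by (intro sum.mono_neutral_right) auto
  finally have u: "u = \<dots>" .
  have parts: "\<exists>l. set l \<subseteq> ?Q \<and> tmonom (tcoeff p u) p = tsum tens l" if p: "p \<in> ?S" for p
  proof -
    obtain l where l: "set l \<subseteq> R \<times> R" "tcoeff p u = tsum tens l" using RR_tsum[OF tcoeff_RR] by blast
    have "set (map (\<lambda>z. (fst z * x ^ fst p, snd z * x ^ snd p)) l) \<subseteq> ?Q"
      using l(1) bound p by (auto intro!: deg_le_monom)
    then show ?thesis unfolding l(2) tmonom_tsum by blast
  qed
  have "\<exists>l. set l \<subseteq> ?Q \<and> (\<Sum>p\<in>?S. tmonom (tcoeff p u) p) = tsum tens l"
    by (rule sum_tsum_exists) (use parts in auto)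
  then show ?thesis using u by auto
qed

lemma comult_tsum_lists:
  "\<exists>qs. length qs = length ps \<and> (\<forall>i<length ps. \<Delta> (snd (ps ! i)) = tsum tens (qs ! i))"
proof -
  define qs where "qs = map (\<lambda>z. SOME l. \<Delta> (snd z) = tsum tens l) ps"
  have "\<Delta> (snd (ps ! i)) = tsum tens (qs ! i)" if "i < length ps" for i
    using that someI_ex[OF tsum_exists[of "\<Delta> (snd (ps ! i))"]] unfolding qs_def by auto
  then show ?thesis by (intro exI[of _ qs]) (simp add: qs_def)
qed

subsection \<open>Slicing the coproduct\<close>

lemma slice_snd_coeff_nonzero:
  assumes "tcoeff m u \<noteq> 0"
  shows "\<exists>f L. Vector_Spaces.linear sc (*) f \<and> Vector_Spaces.linear scU sc L \<and>
    (\<forall>v w. L (tens v w) = sc (f v) w) \<and> coeff (snd m) (L u) \<noteq> 0"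
proof -
  define C where "C = tensor_map id (coeff (snd m))"
  have C: "Vector_Spaces.linear scU scU C" "C (tens v w) = tens v (coeff (snd m) w)" for v w
    unfolding C_def using tensor_map[OF T.linear_id coeff_linear] by auto
  have "tcoeff (fst m, 0) (C u) = tcoeff m u"
    by (rule is_tensor_linear_eq[OF tensor_T vector_space_U linear_map_comp[OF C(1) tcoeff_linear]
          tcoeff_linear]) (simp add: C(2) tcoeff_tens coeff_R_elem[OF coeff_R])
  then have "C u \<noteq> 0" using assms by auto
  from is_tensor_slice_nonzero[OF tensor_T this] obtain f Fl where
    f: "Vector_Spaces.linear sc (*) f" and Fl: "Vector_Spaces.linear scU sc Fl"
    "\<forall>v w. Fl (tens v w) = sc (f v) w" "Fl (C u) \<noteq> 0" by blast
  have coeff_slice: "coeff (snd m) (Fl u) = Fl (C u)"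
    by (rule is_tensor_linear_eq[OF tensor_T vector_space_T linear_map_comp[OF Fl(1) coeff_linear]
          linear_map_comp[OF C(1) Fl(1)]]) (simp add: Fl(2) C(2) coeff_scale)
  then show ?thesis using f Fl by metis
qed

lemma slice_fst_coeff_nonzero:
  assumes "tcoeff m u \<noteq> 0"
  shows "\<exists>f L. Vector_Spaces.linear sc (*) f \<and> Vector_Spaces.linear scU sc L \<and>
    (\<forall>v w. L (tens v w) = sc (f w) v) \<and> coeff (fst m) (L u) \<noteq> 0"
proof -
  define C where "C = tensor_map (coeff (fst m)) id"
  have C: "Vector_Spaces.linear scU scU C" "C (tens v w) = tens (coeff (fst m) v) w" for v w
    unfolding C_def using tensor_map[OF coeff_linear T.linear_id] by auto
  have "tcoeff (0, snd m) (C u) = tcoeff m u"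
    by (rule is_tensor_linear_eq[OF tensor_T vector_space_U linear_map_comp[OF C(1) tcoeff_linear]
          tcoeff_linear]) (simp add: C(2) tcoeff_tens coeff_R_elem[OF coeff_R])
  then have "C u \<noteq> 0" using assms by auto
  from is_tensor_slice_nonzero[OF is_tensor_swap[OF tensor_T] this] obtain f Gr where
    f: "Vector_Spaces.linear sc (*) f" and Gr: "Vector_Spaces.linear scU sc Gr"
    "\<forall>v w. Gr (tens w v) = sc (f v) w" "Gr (C u) \<noteq> 0" by blast
  have coeff_slice: "coeff (fst m) (Gr u) = Gr (C u)"
    by (rule is_tensor_linear_eq[OF tensor_T vector_space_T linear_map_comp[OF Gr(1) coeff_linear]
          linear_map_comp[OF C(1) Gr(1)]]) (simp add: Gr(2) C(2) coeff_scale)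
  then show ?thesis using f Gr by metis
qed

text \<open>Coassociativity bounds the degree of the coproduct of a slice of \<Delta>(a) in the
  factor that was not sliced.\<close>

lemma comult_slice_snd:
  assumes ps: "\<Delta> a = tsum tens ps" "\<forall>z\<in>set ps. deg_le D (snd z)"
    and Fl: "Vector_Spaces.linear scU sc Fl" "\<And>v w. Fl (tens v w) = sc (f v) w"
  shows "deg_le D (Fl (\<Delta> a)) \<and> (\<forall>r. D < snd r \<longrightarrow> tcoeff r (\<Delta> (Fl (\<Delta> a))) = 0)"
proof -
  let ?a = "\<lambda>i. fst (ps ! i)" and ?b = "\<lambda>i. snd (ps ! i)"
  have y: "Fl (\<Delta> a) = (\<Sum>i<length ps. sc (f (?a i)) (?b i))"
    unfolding ps(1) tsum_conv_sum_nth by (simp add: linear_map_sum[OF Fl(1)] Fl(2))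
  have deg: "deg_le D (?b i)" if "i < length ps" for i using ps(2) that by auto
  obtain qs where qs: "length qs = length ps" "\<forall>i<length ps. \<Delta> (?b i) = tsum tens (qs ! i)"
    using comult_tsum_lists by blast
  obtain \<Phi> where \<Phi>: "Vector_Spaces.linear scW scU \<Phi>" "\<forall>u t. \<Phi> (tens3 u t) = tens (Fl u) t"
    using is_tensor_lift[OF tensor_TTT vector_space_U, of "\<lambda>u t. tens (Fl u) t"]
      linear_map_comp[OF Fl(1) tens_linear_left] tens_linear_right by blast
  have tsum_scale: "sum_list (map (\<lambda>z. tens (sc c (fst z)) (snd z)) l) = scU c (tsum tens l)" for c l
    by (induction l) (auto simp: tens_scale_left U.scale_right_distrib)
  have "\<Delta> (Fl (\<Delta> a)) = (\<Sum>i<length ps. scU (f (?a i)) (\<Delta> (?b i)))"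
    unfolding y by (simp add: comult_sum comult_scale)
  also have "\<dots> = \<Phi> (\<Sum>i<length ps. \<Sum>(d, e)\<leftarrow>qs ! i. tens3 (tens (?a i) d) e)"
    using qs(2) by (simp add: linear_map_sum[OF \<Phi>(1)] linear_map_sum_list[OF \<Phi>(1)] case_prod_beta
        \<Phi>(2) Fl(2) tsum_scale)
  also have "\<dots> = (\<Sum>i<length ps. tens (Fl (\<Delta> (?a i))) (?b i))"
    unfolding coassoc[OF ps(1) qs, symmetric] by (simp add: linear_map_sum[OF \<Phi>(1)] \<Phi>(2))
  finally have "\<Delta> (Fl (\<Delta> a)) = \<dots>" .
  then have "tcoeff r (\<Delta> (Fl (\<Delta> a))) = 0" if "D < snd r" for r
    using deg that unfolding deg_le_def by (simp add: linear_map_sum[OF tcoeff_linear] tcoeff_tens)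
  moreover have "deg_le D (Fl (\<Delta> a))"
    using deg unfolding y deg_le_def by (simp add: coeff_sum coeff_scale)
  ultimately show ?thesis by blast
qed

lemma comult_slice_fst:
  assumes ps: "\<Delta> a = tsum tens ps" "\<forall>z\<in>set ps. deg_le D (fst z)"
    and f: "Vector_Spaces.linear sc (*) f"
    and Gr: "Vector_Spaces.linear scU sc Gr" "\<And>v w. Gr (tens v w) = sc (f w) v"
  shows "deg_le D (Gr (\<Delta> a)) \<and> (\<forall>r. D < fst r \<longrightarrow> tcoeff r (\<Delta> (Gr (\<Delta> a))) = 0)"
proof -
  let ?a = "\<lambda>i. fst (ps ! i)" and ?b = "\<lambda>i. snd (ps ! i)"
  have y: "Gr (\<Delta> a) = (\<Sum>i<length ps. sc (f (?b i)) (?a i))"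
    unfolding ps(1) tsum_conv_sum_nth by (simp add: linear_map_sum[OF Gr(1)] Gr(2))
  have deg: "deg_le D (?a i)" if "i < length ps" for i using ps(2) that by auto
  obtain qs where qs: "length qs = length ps" "\<forall>i<length ps. \<Delta> (?b i) = tsum tens (qs ! i)"
    using comult_tsum_lists by blast
  have \<Phi>_lin: "Vector_Spaces.linear scU scU (\<lambda>u. scU (f t) u)" "Vector_Spaces.linear sc scU (\<lambda>t. scU (f t) u)"
    for t u using f by (simp_all add: Vector_Spaces.linear_iff vector_space_U vector_space_T
        U.scale_right_distrib U.scale_left_commute U.scale_left_distrib
        linear_map_add[OF f] linear_map_scale[OF f])
  obtain \<Phi> where \<Phi>: "Vector_Spaces.linear scW scU \<Phi>" "\<forall>u t. \<Phi> (tens3 u t) = scU (f t) u"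
    using is_tensor_lift[OF tensor_TTT vector_space_U, of "\<lambda>u t. scU (f t) u"] \<Phi>_lin by blast
  have tsum_slice: "sum_list (map (\<lambda>z. scU (f (snd z)) (tens b (fst z))) l) = tens b (Gr (tsum tens l))"
    for b l by (induction l) (auto simp: tens_scale_right[symmetric] tens_add_right
        linear_map_add[OF Gr(1)] linear_map_zero[OF Gr(1)] Gr(2))
  have "\<Delta> (Gr (\<Delta> a)) = \<Phi> (\<Sum>i<length ps. tens3 (\<Delta> (?a i)) (?b i))"
    unfolding y by (simp add: comult_sum comult_scale linear_map_sum[OF \<Phi>(1)] \<Phi>(2))
  also have "\<dots> = (\<Sum>i<length ps. tens (?a i) (Gr (\<Delta> (?b i))))"
    unfolding coassoc[OF ps(1) qs]
    using qs(2) by (simp add: linear_map_sum[OF \<Phi>(1)] linear_map_sum_list[OF \<Phi>(1)] case_prod_beta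
        \<Phi>(2) tsum_slice)
  finally have "\<Delta> (Gr (\<Delta> a)) = \<dots>" .
  then have "tcoeff r (\<Delta> (Gr (\<Delta> a))) = 0" if "D < fst r" for r
    using deg that unfolding deg_le_def by (simp add: linear_map_sum[OF tcoeff_linear] tcoeff_tens)
  moreover have "deg_le D (Gr (\<Delta> a))"
    using deg unfolding y deg_le_def by (simp add: coeff_sum coeff_scale)
  ultimately show ?thesis by blast
qed

subsection \<open>The exponents of \<Delta>(x)\<close>

lemma comult_deg_le_expand: "deg_le d y \<Longrightarrow> \<Delta> y = (\<Sum>i<Suc d. \<Delta> (coeff i y) * \<Delta> x ^ i)"
  by (subst deg_le_expand, assumption) (simp only: comult_sum comult_mult comult_power)

text \<open>If the leading exponent of \<Delta>(x) has primary coordinate d, then the leading exponent of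
  \<Delta>(y) has primary coordinate d\<cdot>d for every y of degree d.\<close>

lemma lead_exponent_le_1:
  assumes u: "lex_bounded b (\<Delta> x) m" and c: "tcoeff m (\<Delta> x) \<noteq> 0"
    and d: "d = (if b then snd m else fst m)"
    and y: "deg_le d y" "coeff d y \<noteq> 0"
    and z: "\<forall>r. d < (if b then snd r else fst r) \<longrightarrow> tcoeff r (\<Delta> y) = 0"
  shows "d \<le> 1"
proof (rule ccontr)
  assume "\<not> d \<le> 1"
  define r0 where "r0 = (d * fst m, d * snd m)"
  have "d < (if b then snd r0 else fst r0)"
    using \<open>\<not> d \<le> 1\<close> d unfolding r0_def by (auto intro!: less_le_trans[of d "2 * d"])
  then have "tcoeff r0 (\<Delta> y) = 0" using z by blast
  have tm: "lex_bounded b (\<Delta> (coeff i y) * \<Delta> x ^ i) (i * fst m, i * snd m) \<and>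
      tcoeff (i * fst m, i * snd m) (\<Delta> (coeff i y) * \<Delta> x ^ i) =
      \<Delta> (coeff i y) * tcoeff (i * fst m, i * snd m) (\<Delta> x ^ i)" for i
    by (rule lex_bounded_RR_mult[OF comult_R[OF coeff_R] lex_bounded_power[OF u c, THEN conjunct1]])
  have "tcoeff r0 (\<Delta> (coeff i y) * \<Delta> x ^ i) = 0" if "i < d" for i
  proof -
    have "lex_less b (i * fst m, i * snd m) r0" using that d unfolding r0_def lex_less_def by auto
    then show ?thesis using tm[of i] unfolding lex_bounded_def by blast
  qed
  then have "tcoeff r0 (\<Delta> y) = tcoeff r0 (\<Delta> (coeff d y) * \<Delta> x ^ d)"
    unfolding comult_deg_le_expand[OF y(1)] sum.lessThan_Suc
    by (simp add: linear_map_add[OF tcoeff_linear] linear_map_sum[OF tcoeff_linear])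
  moreover have "tcoeff r0 (\<Delta> (coeff d y) * \<Delta> x ^ d) \<noteq> 0"
    using tm[of d] lex_bounded_power[OF u c] comult_eq_0D y(2)
      RR_no_zero_divisors[OF comult_R[OF coeff_R] tcoeff_RR] unfolding r0_def by metis
  ultimately show False using \<open>tcoeff r0 (\<Delta> y) = 0\<close> by simp
qed

lemma expands_fst_snd_lt: "expands N u \<Longrightarrow> tcoeff p u \<noteq> 0 \<Longrightarrow> fst p < N \<and> snd p < N"
  unfolding expands_def by (meson not_le)

lemma lex_bounded_lead_exists:
  assumes "tcoeff p u \<noteq> 0"
  shows "\<exists>m. lex_bounded b u m \<and> tcoeff m u \<noteq> 0"
proof -
  obtain N where N: "expands N u" using expands_exists by blast
  let ?S = "{p \<in> square N. tcoeff p u \<noteq> 0}"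
  have "p \<in> ?S" using expands_fst_snd_lt[OF N assms] assms by (cases p) auto
  then obtain m where m: "m \<in> ?S" "\<forall>s\<in>?S. \<not> lex_less b m s"
    using lex_less_maximal_exists[of ?S b] by auto
  have "tcoeff r u = 0" if "lex_less b m r" for r
  proof (rule ccontr)
    assume "tcoeff r u \<noteq> 0"
    then have "r \<in> ?S" using expands_fst_snd_lt[OF N] by (cases r) auto
    then show False using m(2) that by blast
  qed
  then show ?thesis using m unfolding lex_bounded_def by blast
qed

lemma lex_bounded_snd_le: "lex_bounded True u m \<Longrightarrow> tcoeff p u \<noteq> 0 \<Longrightarrow> snd p \<le> snd m"
  and lex_bounded_fst_le: "lex_bounded False u m \<Longrightarrow> tcoeff p u \<noteq> 0 \<Longrightarrow> fst p \<le> fst m"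
  unfolding lex_bounded_def lex_less_def by (meson not_le)+

lemma lead_snd_le_1:
  assumes u: "lex_bounded True (\<Delta> x) m" and c: "tcoeff m (\<Delta> x) \<noteq> 0"
  shows "snd m \<le> 1"
proof -
  obtain N where "expands N (\<Delta> x)" using expands_exists by blast
  then obtain ps where ps: "\<Delta> x = tsum tens ps" "\<forall>z\<in>set ps. deg_le (snd m) (snd z)"
    using tsum_deg_le_exists[of "\<Delta> x" N "snd m"] expands_fst_snd_lt lex_bounded_snd_le[OF u]
    by (meson less_imp_le)
  obtain f Fl where Fl: "Vector_Spaces.linear scU sc Fl" "\<And>v w. Fl (tens v w) = sc (f v) w"
    "coeff (snd m) (Fl (\<Delta> x)) \<noteq> 0"
    using slice_snd_coeff_nonzero[OF c] by blast
  show ?thesis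
    using lead_exponent_le_1[OF u c _ _ Fl(3)] comult_slice_snd[OF ps Fl(1,2)] by simp
qed

lemma lead_fst_le_1:
  assumes u: "lex_bounded False (\<Delta> x) m" and c: "tcoeff m (\<Delta> x) \<noteq> 0"
  shows "fst m \<le> 1"
proof -
  obtain N where "expands N (\<Delta> x)" using expands_exists by blast
  then obtain ps where ps: "\<Delta> x = tsum tens ps" "\<forall>z\<in>set ps. deg_le (fst m) (fst z)"
    using tsum_deg_le_exists[of "\<Delta> x" "fst m" N] expands_fst_snd_lt lex_bounded_fst_le[OF u]
    by (meson less_imp_le)
  obtain f Gr where Gr: "Vector_Spaces.linear sc (*) f" "Vector_Spaces.linear scU sc Gr"
    "\<And>v w. Gr (tens v w) = sc (f w) v" "coeff (fst m) (Gr (\<Delta> x)) \<noteq> 0"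
    using slice_fst_coeff_nonzero[OF c] by blast
  show ?thesis
    using lead_exponent_le_1[OF u c _ _ Gr(4)] comult_slice_fst[OF ps Gr(1-3)] by simp
qed

lemma tcoeff_comult_x_le: "tcoeff p (\<Delta> x) \<noteq> 0 \<Longrightarrow> p \<le> (1, 1)"
proof -
  assume p: "tcoeff p (\<Delta> x) \<noteq> 0"
  obtain mT mF where
    mT: "lex_bounded True (\<Delta> x) mT" "tcoeff mT (\<Delta> x) \<noteq> 0" and
    mF: "lex_bounded False (\<Delta> x) mF" "tcoeff mF (\<Delta> x) \<noteq> 0"
    using lex_bounded_lead_exists[OF p] by metis
  show ?thesis
    using lex_bounded_snd_le[OF mT(1) p] lead_snd_le_1[OF mT] lex_bounded_fst_le[OF mF(1) p]
      lead_fst_le_1[OF mF] by (cases p) simp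
qed

lemma expansion_le_one:
  assumes "\<And>p. tcoeff p u \<noteq> 0 \<Longrightarrow> p \<le> (1, 1)"
  shows "u = tcoeff (0, 1) u * tens 1 x + tcoeff (1, 0) u * tens x 1 + tcoeff (1, 1) u * tens x x
      + tcoeff (0, 0) u"
proof -
  obtain N where N: "expands N u" using expands_exists by blast
  have "u = (\<Sum>p\<in>square (max N 2). tmonom (tcoeff p u) p)"
    using expands_mono[OF N, of "max N 2"] unfolding expands_def by auto
  also have "\<dots> = (\<Sum>p\<in>square 2. tmonom (tcoeff p u) p)"
  proof (rule sum.mono_neutral_right)
    show "\<forall>p\<in>square (max N 2) - square 2. tmonom (tcoeff p u) p = 0"
    proof
      fix p assume "p \<in> square (max N 2) - square 2"
      then have "\<not> p \<le> (1, 1)" by (cases p) auto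
      then have "tcoeff p u = 0" using assms by blast
      then show "tmonom (tcoeff p u) p = 0" by simp
    qed
  qed auto
  also have "square 2 = {(0, 0), (0, 1), (1, 0), (1, 1)}"
    by (auto simp: lessThan_nat_numeral)
  finally show ?thesis by (simp add: tmonom_def tens_one algebra_simps)
qed

end

theorem lemma2p2p1:
  fixes sc :: "'f::field \<Rightarrow> 't::ring_1 \<Rightarrow> 't"
    and scU :: "'f \<Rightarrow> 'u::ring_1 \<Rightarrow> 'u" and tens :: "'t \<Rightarrow> 't \<Rightarrow> 'u"
    and scW :: "'f \<Rightarrow> 'w::ab_group_add \<Rightarrow> 'w" and tens3 :: "'u \<Rightarrow> 't \<Rightarrow> 'w"
    and \<Delta> :: "'t \<Rightarrow> 'u" and \<epsilon> :: "'t \<Rightarrow> 'f" and S :: "'t \<Rightarrow> 't"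
    and R :: "'t set" and \<sigma> \<delta> :: "'t \<Rightarrow> 't" and x :: 't
  assumes "hopf_algebra sc scU tens scW tens3 \<Delta> \<epsilon> S"
    and "hopf_subalgebra sc scU tens \<Delta> S R"
    and "falg_automorphism sc R \<sigma>"
    and "sigma_derivation sc R \<sigma> \<delta>"
    and "is_skew_poly_ring R \<sigma> \<delta> x"
    and "is_domain_sub (tensor_sub scU tens R)"
  shows "\<exists>s\<in>tensor_sub scU tens R. \<exists>t\<in>tensor_sub scU tens R.
         \<exists>v\<in>tensor_sub scU tens R. \<exists>w\<in>tensor_sub scU tens R.
           \<Delta> x = s * tens 1 x + t * tens x 1 + v * tens x x + w"
proof -
  interpret skew_hopf_extension sc scU tens scW tens3 \<Delta> \<epsilon> S R \<sigma> \<delta> x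
    using assms by unfold_locales
  show ?thesis
    using expansion_le_one[OF tcoeff_comult_x_le] tcoeff_RR by blast
qed

end
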